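(* Assume $M$ is projective in $\sigma[M]$. Then $\mathrm{Nil}_*(M)=\mathrm{Nil}_*(M)\cdot M=M\text{-}\mathrm{Nil}_*(M)$.
   Context: $R$ is a ring with identity, modules are unital left $R$-modules, $M$ is a fixed left $R$-module; $\sigma[M]$ is the full subcategory of $R$-modules isomorphic to submodules of $M$-generated modules. For $N\le M$ and a module $X$, $N\cdot X$ is the intersection of the kernels of all homomorphisms $X\to W$ where $W$ ranges over modules with $f(N)=0$ for all $f\in\mathrm{Hom}_R(M,W)$. An element $x$ of a module $X$ is strongly nilpotent if $x=\sum_{i=1}^r a_ix_i$ with $a_i\in R$, $x_i\in X$, such that for each $i$ and every sequence $a_{i1},a_{i2},\dots$ with $a_{i1}=a_i$ and $a_{i,n+1}\in a_{in}Ra_{in}$ for all $n$, there is $k$ with $a_{ik}Rx_i=0$; $\mathrm{Nil}_*(X)$ is the set of strongly nilpotent elements of $X$ (a submodule of $X$). For $X\in\sigma[M]$, $x\in X$ is strongly $M$-nilpotent if $x=\sum_{i=1}^n r_if_i(m_i)$ with $r_i\in R$, $m_i\in M$, $x_i\in X$, $f_i\in\mathrm{Hom}_R(M,Rx_i)$, such that for each $i$ and every sequence $r_{i1},r_{i2},\dots$ with $r_{i1}=r_i$ and $r_{i,t+1}\in r_{it}Rr_{it}$ for all $t$, there is $k$ with $r_{ik}Rf_i(m_i)=0$; $M\text{-}\mathrm{Nil}_*(X)$ is the set of strongly $M$-nilpotent elements of $X$. *)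

theory Defs
  imports Main
begin

record ('r, 'a) lmod =
  mcarrier :: "'a set"
  madd :: "'a \<Rightarrow> 'a \<Rightarrow> 'a"
  mzero :: "'a"
  msmult :: "'r \<Rightarrow> 'a \<Rightarrow> 'a"

definition lmodule :: "('r::ring_1, 'a) lmod \<Rightarrow> bool" where
  "lmodule X \<longleftrightarrow>
     mzero X \<in> mcarrier X \<and>
     (\<forall>x\<in>mcarrier X. \<forall>y\<in>mcarrier X. madd X x y \<in> mcarrier X) \<and>
     (\<forall>r. \<forall>x\<in>mcarrier X. msmult X r x \<in> mcarrier X) \<and>
     (\<forall>x\<in>mcarrier X. \<forall>y\<in>mcarrier X. \<forall>z\<in>mcarrier X.
        madd X (madd X x y) z = madd X x (madd X y z)) \<and>
     (\<forall>x\<in>mcarrier X. \<forall>y\<in>mcarrier X. madd X x y = madd X y x) \<and>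
     (\<forall>x\<in>mcarrier X. madd X (mzero X) x = x) \<and>
     (\<forall>x\<in>mcarrier X. \<exists>y\<in>mcarrier X. madd X x y = mzero X) \<and>
     (\<forall>r. \<forall>x\<in>mcarrier X. \<forall>y\<in>mcarrier X.
        msmult X r (madd X x y) = madd X (msmult X r x) (msmult X r y)) \<and>
     (\<forall>r s. \<forall>x\<in>mcarrier X. msmult X (r + s) x = madd X (msmult X r x) (msmult X s x)) \<and>
     (\<forall>r s. \<forall>x\<in>mcarrier X. msmult X (r * s) x = msmult X r (msmult X s x)) \<and>
     (\<forall>x\<in>mcarrier X. msmult X 1 x = x)"

definition mhom :: "('r::ring_1, 'a) lmod \<Rightarrow> ('r, 'b) lmod \<Rightarrow> ('a \<Rightarrow> 'b) \<Rightarrow> bool" where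
  "mhom X Y f \<longleftrightarrow>
     (\<forall>x\<in>mcarrier X. f x \<in> mcarrier Y) \<and>
     (\<forall>x\<in>mcarrier X. \<forall>y\<in>mcarrier X. f (madd X x y) = madd Y (f x) (f y)) \<and>
     (\<forall>r. \<forall>x\<in>mcarrier X. f (msmult X r x) = msmult Y r (f x))"

primrec msum :: "('r, 'a) lmod \<Rightarrow> (nat \<Rightarrow> 'a) \<Rightarrow> nat \<Rightarrow> 'a" where
  "msum X f 0 = mzero X"
| "msum X f (Suc n) = madd X (msum X f n) (f n)"

definition cyclic_sub :: "('r::ring_1, 'a) lmod \<Rightarrow> 'a \<Rightarrow> ('r, 'a) lmod" where
  "cyclic_sub X x = X\<lparr>mcarrier := range (\<lambda>r. msmult X r x)\<rparr>"

text \<open>G is M-generated: G is the sum of the images of all homomorphisms M \<rightarrow> G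
  (equivalently, an epimorphic image of a direct sum of copies of M).\<close>
definition mgenerated :: "('r::ring_1, 'm) lmod \<Rightarrow> ('r, 'a) lmod \<Rightarrow> bool" where
  "mgenerated M G \<longleftrightarrow>
     (\<forall>g\<in>mcarrier G. \<exists>n fs ms. (\<forall>i<n. mhom M G (fs i) \<and> ms i \<in> mcarrier M) \<and>
        g = msum G (\<lambda>i. fs i (ms i)) n)"

text \<open>X belongs to sigma[M]: X is isomorphic to a submodule of an M-generated module
  (the M-generated module being taken with elements of the same type as X).\<close>
definition in_sigma :: "('r::ring_1, 'm) lmod \<Rightarrow> ('r, 'a) lmod \<Rightarrow> bool" where
  "in_sigma M X \<longleftrightarrow> lmodule X \<and>
     (\<exists>G :: ('r, 'a) lmod. lmodule G \<and> mgenerated M G \<and>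
        (\<exists>f. mhom X G f \<and> inj_on f (mcarrier X)))"

text \<open>M is projective in sigma[M], relative to all modules of sigma[M] whose elements
  live in the universe type 'u.\<close>
definition proj_sigma :: "('r::ring_1, 'm) lmod \<Rightarrow> 'u itself \<Rightarrow> bool" where
  "proj_sigma M (U :: 'u itself) \<longleftrightarrow>
     in_sigma M M \<and>
     (\<forall>(A :: ('r, 'u) lmod) (B :: ('r, 'u) lmod) g f.
        in_sigma M A \<and> in_sigma M B \<and> mhom A B g \<and> g ` mcarrier A = mcarrier B \<and>
        mhom M B f \<longrightarrow>
        (\<exists>h. mhom M A h \<and> (\<forall>m\<in>mcarrier M. g (h m) = f m)))"

text \<open>W ranges over modules with elements of
  type 'a set, which contains (a copy of) every quotient of X, so nothing is lost.\<close>
definition mprod :: "('r::ring_1, 'm) lmod \<Rightarrow> 'm set \<Rightarrow> ('r, 'a) lmod \<Rightarrow> 'a set" where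
  "mprod M N X = {x \<in> mcarrier X.
     \<forall>(W :: ('r, 'a set) lmod) \<phi>.
       lmodule W \<and> (\<forall>f. mhom M W f \<longrightarrow> (\<forall>n\<in>N. f n = mzero W)) \<and> mhom X W \<phi>
       \<longrightarrow> \<phi> x = mzero W}"

definition snil_pair :: "('r::ring_1, 'a) lmod \<Rightarrow> 'r \<Rightarrow> 'a \<Rightarrow> bool" where
  "snil_pair X a y \<longleftrightarrow>
     (\<forall>s :: nat \<Rightarrow> 'r. s 0 = a \<and> (\<forall>n. \<exists>r. s (Suc n) = s n * r * s n) \<longrightarrow>
        (\<exists>k. \<forall>r. msmult X (s k * r) y = mzero X))"

definition Nil_star :: "('r::ring_1, 'a) lmod \<Rightarrow> 'a set" where
  "Nil_star X = {x \<in> mcarrier X. \<exists>n a xs.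
     (\<forall>i<n. xs i \<in> mcarrier X \<and> snil_pair X (a i) (xs i)) \<and>
     x = msum X (\<lambda>i. msmult X (a i) (xs i)) n}"

definition MNil_star :: "('r::ring_1, 'm) lmod \<Rightarrow> ('r, 'a) lmod \<Rightarrow> 'a set" where
  "MNil_star M X = {x \<in> mcarrier X. \<exists>n r ms xs fs.
     (\<forall>i<n. ms i \<in> mcarrier M \<and> xs i \<in> mcarrier X \<and>
        mhom M (cyclic_sub X (xs i)) (fs i) \<and> snil_pair X (r i) (fs i (ms i))) \<and>
     x = msum X (\<lambda>i. msmult X (r i) (fs i (ms i))) n}"

end

theory Submission
  imports Defs "HOL-Algebra.FiniteProduct"
begin

text \<open>
  First equality: by projectivity every map \<open>M \<rightarrow> M/Nil_*(M)\<close> lifts to an endomorphism of \<open>M\<close>,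
  so it kills \<open>Nil_*(M)\<close>; hence the quotient map occurs in the definition of \<open>Nil_*(M) \<cdot> M\<close>.

  Second equality: \<open>M-Nil_*(M) \<subseteq> Nil_*(M)\<close> always. Conversely, projectivity lifts the identity
  through the summation map of a direct sum of cyclic submodules, so each \<open>x \<in> M\<close> is a sum
  \<open>\<Sum> h\<^sub>j(x)\<close> with \<open>h\<^sub>j : M \<rightarrow> R y\<^sub>j\<close>, and then \<open>a x = \<Sum> a h\<^sub>j(x)\<close> is strongly \<open>M\<close>-nilpotent.
  Since projectivity only refers to modules whose elements are sets of elements of \<open>M\<close>, the
  direct sum must be coded by such sets: for infinite element type we code a sum over all of
  \<open>M\<close> by graphs; for finite element type only binary sums fit, and we peel off one cyclic
  summand at a time along a list spanning \<open>M\<close>.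
\<close>

section \<open>Elementary module theory\<close>

lemma lm_zero: "lmodule X \<Longrightarrow> mzero X \<in> mcarrier X"
  unfolding lmodule_def by (elim conjE) blast
lemma lm_add: "lmodule X \<Longrightarrow> x \<in> mcarrier X \<Longrightarrow> y \<in> mcarrier X \<Longrightarrow> madd X x y \<in> mcarrier X"
  unfolding lmodule_def by (elim conjE) blast
lemma lm_smult: "lmodule X \<Longrightarrow> x \<in> mcarrier X \<Longrightarrow> msmult X r x \<in> mcarrier X"
  unfolding lmodule_def by (elim conjE) blast
lemma lm_assoc: "lmodule X \<Longrightarrow> x \<in> mcarrier X \<Longrightarrow> y \<in> mcarrier X \<Longrightarrow> z \<in> mcarrier X \<Longrightarrow>
    madd X (madd X x y) z = madd X x (madd X y z)"
  unfolding lmodule_def by (elim conjE) blast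
lemma lm_comm: "lmodule X \<Longrightarrow> x \<in> mcarrier X \<Longrightarrow> y \<in> mcarrier X \<Longrightarrow> madd X x y = madd X y x"
  unfolding lmodule_def by (elim conjE) blast
lemma lm_lzero: "lmodule X \<Longrightarrow> x \<in> mcarrier X \<Longrightarrow> madd X (mzero X) x = x"
  unfolding lmodule_def by (elim conjE) blast
lemma lm_inv: "lmodule X \<Longrightarrow> x \<in> mcarrier X \<Longrightarrow> \<exists>y\<in>mcarrier X. madd X x y = mzero X"
  unfolding lmodule_def by (elim conjE) blast
lemma lm_smult_add: "lmodule X \<Longrightarrow> x \<in> mcarrier X \<Longrightarrow> y \<in> mcarrier X \<Longrightarrow>
    msmult X r (madd X x y) = madd X (msmult X r x) (msmult X r y)"
  unfolding lmodule_def by (elim conjE) blast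
lemma lm_add_smult: "lmodule X \<Longrightarrow> x \<in> mcarrier X \<Longrightarrow>
    msmult X (r + s) x = madd X (msmult X r x) (msmult X s x)"
  unfolding lmodule_def by (elim conjE) blast
lemma lm_smult_assoc: "lmodule X \<Longrightarrow> x \<in> mcarrier X \<Longrightarrow> msmult X (r * s) x = msmult X r (msmult X s x)"
  unfolding lmodule_def by (elim conjE) blast
lemma lm_one: "lmodule X \<Longrightarrow> x \<in> mcarrier X \<Longrightarrow> msmult X 1 x = x"
  by (simp add: lmodule_def)

lemma lm_rzero: "lmodule X \<Longrightarrow> x \<in> mcarrier X \<Longrightarrow> madd X x (mzero X) = x"
  by (metis lm_comm lm_lzero lm_zero)

lemma lm_cancel:
  assumes X: "lmodule X" and c: "a \<in> mcarrier X" "b \<in> mcarrier X" "c \<in> mcarrier X"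
    and e: "madd X a b = madd X a c"
  shows "b = c"
proof -
  obtain y where y: "y \<in> mcarrier X" "madd X y a = mzero X"
    using lm_inv[OF X c(1)] lm_comm[OF X c(1)] by metis
  have "madd X (madd X y a) b = madd X (madd X y a) c"
    using e lm_assoc[OF X] c y(1) by simp
  then show ?thesis using y(2) lm_lzero[OF X] c by simp
qed

lemma lm_zero_smult:
  assumes X: "lmodule X" and x: "x \<in> mcarrier X"
  shows "msmult X 0 x = mzero X"
proof -
  have "madd X (msmult X 0 x) (msmult X 0 x) = madd X (msmult X 0 x) (mzero X)"
    using lm_add_smult[OF X x, of 0 0] lm_rzero[OF X] lm_smult[OF X x] by simp
  then show ?thesis using lm_cancel[OF X] lm_smult[OF X x] lm_zero[OF X] by blast
qed

lemma lm_smult_zero: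
  assumes X: "lmodule X"
  shows "msmult X r (mzero X) = mzero X"
proof -
  have z: "mzero X \<in> mcarrier X" using lm_zero[OF X] .
  have "madd X (msmult X r (mzero X)) (msmult X r (mzero X)) = madd X (msmult X r (mzero X)) (mzero X)"
    using lm_smult_add[OF X z z, of r] lm_rzero[OF X] lm_smult[OF X z] lm_lzero[OF X z] by simp
  then show ?thesis using lm_cancel[OF X] lm_smult[OF X z] z by blast
qed

lemma lm_neg:
  assumes X: "lmodule X" and x: "x \<in> mcarrier X"
  shows "madd X x (msmult X (-1) x) = mzero X"
proof -
  have "madd X x (msmult X (-1) x) = msmult X (1 + -1) x"
    using lm_add_smult[OF X x] lm_one[OF X x] by metis
  then show ?thesis using lm_zero_smult[OF X x] by simp
qed

lemma lm_neg_unique: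
  assumes X: "lmodule X" and x: "x \<in> mcarrier X" "y \<in> mcarrier X" and e: "madd X x y = mzero X"
  shows "y = msmult X (-1) x"
  using lm_cancel[OF X x(1) x(2) lm_smult[OF X x(1)]] e lm_neg[OF X x(1)] by simp

lemma lm_swap:
  assumes X: "lmodule X" and c: "a \<in> mcarrier X" "b \<in> mcarrier X" "c \<in> mcarrier X" "d \<in> mcarrier X"
  shows "madd X (madd X a b) (madd X c d) = madd X (madd X a c) (madd X b d)"
  using c by (metis lm_add[OF X] lm_assoc[OF X] lm_comm[OF X])

lemma msum_closed: "lmodule X \<Longrightarrow> (\<And>i. i < n \<Longrightarrow> f i \<in> mcarrier X) \<Longrightarrow> msum X f n \<in> mcarrier X"
  by (induction n) (auto intro: lm_zero lm_add)

lemma msum_cong: "(\<And>i. i < n \<Longrightarrow> f i = g i) \<Longrightarrow> msum X f n = msum X g n"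
  by (induction n) auto

lemma msum_append:
  assumes X: "lmodule X" and f: "\<And>i. i < n \<Longrightarrow> f i \<in> mcarrier X"
    and g: "\<And>i. i < k \<Longrightarrow> g i \<in> mcarrier X"
  shows "msum X (\<lambda>i. if i < n then f i else g (i - n)) (n + k) = madd X (msum X f n) (msum X g k)"
  using g
proof (induction k)
  case 0
  have "msum X (\<lambda>i. if i < n then f i else g (i - n)) n = msum X f n" by (rule msum_cong) auto
  then show ?case using lm_rzero[OF X msum_closed[OF X f]] by simp
next
  case (Suc k)
  then show ?case using lm_assoc[OF X] msum_closed[OF X f] msum_closed[OF X, of k g] by simp
qed

lemma msum_smult:
  assumes X: "lmodule X" and f: "\<And>i. i < n \<Longrightarrow> f i \<in> mcarrier X"
  shows "msmult X r (msum X f n) = msum X (\<lambda>i. msmult X r (f i)) n"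
  using f by (induction n) (auto simp: lm_smult_zero[OF X] lm_smult_add[OF X] msum_closed[OF X])

lemma mhom_comp: "mhom X Y f \<Longrightarrow> mhom Y Z g \<Longrightarrow> mhom X Z (g \<circ> f)"
  unfolding mhom_def by auto

lemma mhom_cong:
  assumes X: "lmodule X" and f: "mhom X Y f" and fg: "\<And>x. x \<in> mcarrier X \<Longrightarrow> f x = g x"
  shows "mhom X Y g"
  using f fg lm_add[OF X] lm_smult[OF X] unfolding mhom_def by auto

lemma mhom_zero:
  assumes X: "lmodule X" and Y: "lmodule Y" and h: "mhom X Y f"
  shows "f (mzero X) = mzero Y"
proof -
  have "f (mzero X) = f (msmult X 0 (mzero X))" using lm_zero_smult[OF X lm_zero[OF X]] by simp
  also have "\<dots> = msmult Y 0 (f (mzero X))" using h lm_zero[OF X] unfolding mhom_def by blast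
  also have "\<dots> = mzero Y" using lm_zero_smult[OF Y] h lm_zero[OF X] unfolding mhom_def by blast
  finally show ?thesis .
qed

lemma mhom_msum:
  assumes X: "lmodule X" and Y: "lmodule Y" and h: "mhom X Y f"
    and g: "\<And>i. i < n \<Longrightarrow> g i \<in> mcarrier X"
  shows "f (msum X g n) = msum Y (\<lambda>i. f (g i)) n"
  using g by (induction n) (auto simp: mhom_zero[OF X Y h] msum_closed[OF X] h[unfolded mhom_def])

definition submod :: "('r::ring_1, 'a) lmod \<Rightarrow> 'a set \<Rightarrow> bool" where
  "submod X K \<longleftrightarrow> K \<subseteq> mcarrier X \<and> mzero X \<in> K \<and> (\<forall>a\<in>K. \<forall>b\<in>K. madd X a b \<in> K)
     \<and> (\<forall>r. \<forall>a\<in>K. msmult X r a \<in> K)"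

definition sub :: "('r::ring_1, 'a) lmod \<Rightarrow> 'a set \<Rightarrow> ('r, 'a) lmod" where
  "sub X S = X\<lparr>mcarrier := S\<rparr>"

lemma sub_simps [simp]:
  "mcarrier (sub X S) = S" "madd (sub X S) = madd X" "mzero (sub X S) = mzero X"
  "msmult (sub X S) = msmult X"
  by (simp_all add: sub_def)

lemma submod_carrier: "lmodule X \<Longrightarrow> submod X (mcarrier X)"
  unfolding submod_def by (auto intro: lm_zero lm_add lm_smult)

lemma lmodule_sub:
  assumes X: "lmodule X" and K: "submod X K"
  shows "lmodule (sub X K)"
proof -
  have KS: "K \<subseteq> mcarrier X" and K0: "mzero X \<in> K" and Ka: "\<forall>a\<in>K. \<forall>b\<in>K. madd X a b \<in> K"
    and Ks: "\<forall>r. \<forall>a\<in>K. msmult X r a \<in> K" using K unfolding submod_def by blast+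
  have inv: "\<forall>x\<in>K. \<exists>y\<in>K. madd X x y = mzero X" using lm_neg[OF X] KS Ks by blast
  have "\<forall>x\<in>K. \<forall>y\<in>K. \<forall>z\<in>K. madd X (madd X x y) z = madd X x (madd X y z)"
    "\<forall>x\<in>K. \<forall>y\<in>K. madd X x y = madd X y x" "\<forall>x\<in>K. madd X (mzero X) x = x"
    "\<forall>r. \<forall>x\<in>K. \<forall>y\<in>K. msmult X r (madd X x y) = madd X (msmult X r x) (msmult X r y)"
    "\<forall>r s. \<forall>x\<in>K. msmult X (r + s) x = madd X (msmult X r x) (msmult X s x)"
    "\<forall>r s. \<forall>x\<in>K. msmult X (r * s) x = msmult X r (msmult X s x)"
    "\<forall>x\<in>K. msmult X 1 x = x"
    using KS lm_assoc[OF X] lm_comm[OF X] lm_lzero[OF X] lm_smult_add[OF X] lm_add_smult[OF X]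
      lm_smult_assoc[OF X] lm_one[OF X] by (simp_all add: subset_iff)
  then show ?thesis unfolding lmodule_def sub_simps using K0 Ka Ks inv by blast
qed

lemma cyclic_sub_eq: "cyclic_sub X y = sub X (range (\<lambda>r. msmult X r y))"
  unfolding cyclic_sub_def sub_def by simp

lemma submod_cyclic:
  assumes X: "lmodule X" and y: "y \<in> mcarrier X"
  shows "submod X (range (\<lambda>r. msmult X r y))"
  unfolding submod_def
proof (intro conjI ballI allI)
  show "range (\<lambda>r. msmult X r y) \<subseteq> mcarrier X" using lm_smult[OF X y] by auto
  show "mzero X \<in> range (\<lambda>r. msmult X r y)" using lm_zero_smult[OF X y] by (metis rangeI)
next
  fix a b assume "a \<in> range (\<lambda>r. msmult X r y)" "b \<in> range (\<lambda>r. msmult X r y)"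
  then obtain r s where "a = msmult X r y" "b = msmult X s y" by blast
  then show "madd X a b \<in> range (\<lambda>r. msmult X r y)" using lm_add_smult[OF X y, of r s] by (metis rangeI)
next
  fix t a assume "a \<in> range (\<lambda>r. msmult X r y)"
  then obtain r where "a = msmult X r y" by blast
  then show "msmult X t a \<in> range (\<lambda>r. msmult X r y)" using lm_smult_assoc[OF X y, of t r] by (metis rangeI)
qed

lemma lmodule_cyclic: "lmodule X \<Longrightarrow> y \<in> mcarrier X \<Longrightarrow> lmodule (cyclic_sub X y)"
  unfolding cyclic_sub_eq by (intro lmodule_sub submod_cyclic)

lemma cyclic_carrier: "mcarrier (cyclic_sub X y) = range (\<lambda>r. msmult X r y)"
  unfolding cyclic_sub_def by simp

lemma mhom_cyclic_into:
  assumes X: "lmodule X" and y: "y \<in> mcarrier X" and f: "mhom Y (cyclic_sub X y) f"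
  shows "mhom Y X f"
  using f lm_smult[OF X y] unfolding mhom_def cyclic_carrier by (auto simp: cyclic_sub_def)

section \<open>Finite sums of generators\<close>

text \<open>Both \<open>Nil_*\<close> and \<open>M-Nil_*\<close> consist of the finite sums of elements of a set of
  ``generating terms''; we develop this notion once.\<close>

definition finsums :: "('r::ring_1, 'a) lmod \<Rightarrow> 'a set \<Rightarrow> 'a set" where
  "finsums X T = {x. \<exists>n g. (\<forall>i<n. g i \<in> T) \<and> x = msum X g n}"

lemma finsumsI: "\<forall>i<n. g i \<in> T \<Longrightarrow> x = msum X g n \<Longrightarrow> x \<in> finsums X T"
  unfolding finsums_def by blast

lemma finsums_carrier: "lmodule X \<Longrightarrow> T \<subseteq> mcarrier X \<Longrightarrow> finsums X T \<subseteq> mcarrier X"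
  unfolding finsums_def using msum_closed by blast

lemma finsums_zero: "mzero X \<in> finsums X T"
  by (rule finsumsI[where n = 0]) simp_all

lemma finsums_add:
  assumes X: "lmodule X" and T: "T \<subseteq> mcarrier X" and x: "x \<in> finsums X T" and y: "y \<in> finsums X T"
  shows "madd X x y \<in> finsums X T"
proof -
  obtain n f k g where f: "\<forall>i<n. f i \<in> T" "x = msum X f n" and g: "\<forall>i<k. g i \<in> T" "y = msum X g k"
    using x y unfolding finsums_def by blast
  have fc: "\<And>i. i < n \<Longrightarrow> f i \<in> mcarrier X" and gc: "\<And>i. i < k \<Longrightarrow> g i \<in> mcarrier X"
    using f g T by auto
  have "madd X x y = msum X (\<lambda>i. if i < n then f i else g (i - n)) (n + k)"
    unfolding f(2) g(2) by (rule msum_append[OF X fc gc, symmetric])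
  moreover have "\<forall>i<n + k. (if i < n then f i else g (i - n)) \<in> T" using f g by auto
  ultimately show ?thesis by (intro finsumsI)
qed

lemma finsums_smult:
  assumes X: "lmodule X" and T: "T \<subseteq> mcarrier X" and Tr: "\<And>t. t \<in> T \<Longrightarrow> msmult X r t \<in> T"
    and x: "x \<in> finsums X T"
  shows "msmult X r x \<in> finsums X T"
proof -
  obtain n g where g: "\<forall>i<n. g i \<in> T" "x = msum X g n" using x unfolding finsums_def by blast
  have gc: "\<And>i. i < n \<Longrightarrow> g i \<in> mcarrier X" using g T by auto
  have "msmult X r x = msum X (\<lambda>i. msmult X r (g i)) n" unfolding g(2) by (rule msum_smult[OF X gc])
  then show ?thesis using g Tr by (intro finsumsI) auto
qed

lemma submod_finsums:
  assumes X: "lmodule X" and T: "T \<subseteq> mcarrier X" and Tr: "\<And>r t. t \<in> T \<Longrightarrow> msmult X r t \<in> T"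
  shows "submod X (finsums X T)"
  unfolding submod_def
  using finsums_carrier[OF X T] finsums_zero finsums_add[OF X T] finsums_smult[OF X T Tr] by blast

lemma finsums_hom:
  assumes X: "lmodule X" and Y: "lmodule Y" and f: "mhom X Y f" and T: "T \<subseteq> mcarrier X"
    and fT: "f ` T \<subseteq> S" and x: "x \<in> finsums X T"
  shows "f x \<in> finsums Y S"
proof -
  obtain n g where g: "\<forall>i<n. g i \<in> T" "x = msum X g n" using x unfolding finsums_def by blast
  have gc: "\<And>i. i < n \<Longrightarrow> g i \<in> mcarrier X" using g T by auto
  have "f x = msum Y (\<lambda>i. f (g i)) n" unfolding g(2) by (rule mhom_msum[OF X Y f gc])
  then show ?thesis using g fT by (intro finsumsI) auto
qed

lemma finsums_mono: "T \<subseteq> S \<Longrightarrow> finsums X T \<subseteq> finsums X S"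
  unfolding finsums_def by blast

lemma finsums_subset:
  assumes X: "lmodule X" and S: "S \<subseteq> mcarrier X" and T: "T \<subseteq> finsums X S"
  shows "finsums X T \<subseteq> finsums X S"
proof
  fix x assume "x \<in> finsums X T"
  then obtain n g where g: "\<forall>i<n. g i \<in> T" "x = msum X g n" unfolding finsums_def by blast
  have "msum X g m \<in> finsums X S" if "m \<le> n" for m
  using that
  proof (induction m)
    case (Suc m)
    then have "g m \<in> finsums X S" using g(1) T by auto
    then show ?case using Suc finsums_add[OF X S] by simp
  qed (simp add: finsums_zero)
  then show "x \<in> finsums X S" using g by blast
qed

section \<open>Strongly nilpotent elements\<close>

text \<open>The nilpotency condition is inherited by left multiples \<open>r a\<close>: a sequence starting
  at \<open>r a\<close> is \<open>r\<close> times a sequence starting at \<open>a\<close>.\<close>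

lemma snil_mult:
  assumes X: "lmodule X" and y: "y \<in> mcarrier X" and sn: "snil_pair X a y"
  shows "snil_pair X (r * a) y"
  unfolding snil_pair_def
proof (intro allI impI)
  fix s :: "nat \<Rightarrow> 'a" assume H: "s 0 = r * a \<and> (\<forall>n. \<exists>t. s (Suc n) = s n * t * s n)"
  then obtain t where t: "\<And>n. s (Suc n) = s n * t n * s n" by metis
  define u where "u = rec_nat a (\<lambda>n un. un * (t n * r) * un)"
  have u0: "u 0 = a" and uS: "\<And>n. u (Suc n) = u n * (t n * r) * u n" by (simp_all add: u_def)
  have su: "s n = r * u n" for n
    by (induction n) (use H u0 t uS in \<open>simp_all add: mult.assoc\<close>)
  obtain k where k: "\<forall>q. msmult X (u k * q) y = mzero X"
    using sn u0 uS unfolding snil_pair_def by blast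
  have "msmult X (s k * q) y = mzero X" for q
    using k su lm_smult_assoc[OF X y] lm_smult_zero[OF X] by (simp add: mult.assoc)
  then show "\<exists>k. \<forall>q. msmult X (s k * q) y = mzero X" by blast
qed

lemma snil_hom:
  assumes X: "lmodule X" and Y: "lmodule Y" and h: "mhom X Y f" and y: "y \<in> mcarrier X"
    and sn: "snil_pair X a y"
  shows "snil_pair Y a (f y)"
proof -
  have "msmult Y q (f y) = f (msmult X q y)" for q using h y unfolding mhom_def by metis
  then show ?thesis using sn mhom_zero[OF X Y h] unfolding snil_pair_def by metis
qed

definition nil_terms :: "('r::ring_1, 'a) lmod \<Rightarrow> 'a set" where
  "nil_terms X = {msmult X a y | a y. y \<in> mcarrier X \<and> snil_pair X a y}"

lemma nil_terms_carrier: "lmodule X \<Longrightarrow> nil_terms X \<subseteq> mcarrier X"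
  unfolding nil_terms_def by (auto intro: lm_smult)

lemma Nil_star_finsums:
  assumes X: "lmodule X"
  shows "Nil_star X = finsums X (nil_terms X)"
proof
  show "Nil_star X \<subseteq> finsums X (nil_terms X)"
  proof
    fix x assume "x \<in> Nil_star X"
    then obtain n a y where A: "\<forall>i<n. y i \<in> mcarrier X \<and> snil_pair X (a i) (y i)"
      "x = msum X (\<lambda>i. msmult X (a i) (y i)) n" unfolding Nil_star_def by blast
    then show "x \<in> finsums X (nil_terms X)"
      unfolding nil_terms_def by (intro finsumsI[where g = "\<lambda>i. msmult X (a i) (y i)"]) auto
  qed
next
  show "finsums X (nil_terms X) \<subseteq> Nil_star X"
  proof
    fix x assume x: "x \<in> finsums X (nil_terms X)"
    then obtain n g where g: "\<forall>i<n. g i \<in> nil_terms X" "x = msum X g n"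
      unfolding finsums_def by blast
    then have "\<forall>i<n. \<exists>a y. g i = msmult X a y \<and> y \<in> mcarrier X \<and> snil_pair X a y"
      unfolding nil_terms_def by blast
    then obtain a y where A: "\<forall>i<n. g i = msmult X (a i) (y i) \<and> y i \<in> mcarrier X \<and> snil_pair X (a i) (y i)"
      by metis
    have "x = msum X (\<lambda>i. msmult X (a i) (y i)) n" unfolding g(2) by (rule msum_cong) (use A in auto)
    moreover have "x \<in> mcarrier X" using x finsums_carrier[OF X nil_terms_carrier[OF X]] by blast
    ultimately show "x \<in> Nil_star X"
      using A unfolding Nil_star_def by (intro CollectI conjI exI[of _ n] exI[of _ a] exI[of _ y]) auto
  qed
qed

lemma submod_Nil_star:
  assumes X: "lmodule X"
  shows "submod X (Nil_star X)"
proof -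
  have "msmult X r t \<in> nil_terms X" if tT: "t \<in> nil_terms X" for r t
  proof -
    obtain a y where t: "t = msmult X a y" "y \<in> mcarrier X" "snil_pair X a y"
      using tT unfolding nil_terms_def by blast
    then have "msmult X r t = msmult X (r * a) y" "snil_pair X (r * a) y"
      using lm_smult_assoc[OF X] snil_mult[OF X] by simp_all
    then show ?thesis using t(2) unfolding nil_terms_def by blast
  qed
  then show ?thesis
    unfolding Nil_star_finsums[OF X] by (rule submod_finsums[OF X nil_terms_carrier[OF X]])
qed

lemma Nil_star_hom:
  assumes X: "lmodule X" and f: "mhom X X f" and x: "x \<in> Nil_star X"
  shows "f x \<in> Nil_star X"
proof -
  have "f ` nil_terms X \<subseteq> nil_terms X"
    using f snil_hom[OF X X f] unfolding nil_terms_def mhom_def by fastforce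
  then show ?thesis using finsums_hom[OF X X f nil_terms_carrier[OF X]] x
    unfolding Nil_star_finsums[OF X] by blast
qed

definition mnil_terms :: "('r::ring_1, 'm) lmod \<Rightarrow> ('r, 'a) lmod \<Rightarrow> 'a set" where
  "mnil_terms M X = {msmult X r (f m) | r f m y. m \<in> mcarrier M \<and> y \<in> mcarrier X \<and>
     mhom M (cyclic_sub X y) f \<and> snil_pair X r (f m)}"

lemma mnil_terms_nil_terms:
  assumes X: "lmodule X"
  shows "mnil_terms M X \<subseteq> nil_terms X"
proof
  fix t assume "t \<in> mnil_terms M X"
  then obtain r f m y where t: "t = msmult X r (f m)" "m \<in> mcarrier M" "y \<in> mcarrier X"
    "mhom M (cyclic_sub X y) f" "snil_pair X r (f m)" unfolding mnil_terms_def by blast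
  then have "f m \<in> mcarrier X" using mhom_cyclic_into[OF X] unfolding mhom_def by blast
  then show "t \<in> nil_terms X" using t unfolding nil_terms_def by blast
qed

lemma MNil_star_finsums:
  assumes X: "lmodule X"
  shows "MNil_star M X = finsums X (mnil_terms M X)"
proof
  show "MNil_star M X \<subseteq> finsums X (mnil_terms M X)"
  proof
    fix x assume "x \<in> MNil_star M X"
    then obtain n r m y f where A: "\<forall>i<n. m i \<in> mcarrier M \<and> y i \<in> mcarrier X \<and>
        mhom M (cyclic_sub X (y i)) (f i) \<and> snil_pair X (r i) (f i (m i))"
      "x = msum X (\<lambda>i. msmult X (r i) (f i (m i))) n" unfolding MNil_star_def by blast
    moreover have "\<forall>i<n. msmult X (r i) (f i (m i)) \<in> mnil_terms M X"
      using A(1) unfolding mnil_terms_def by blast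
    ultimately show "x \<in> finsums X (mnil_terms M X)" by (intro finsumsI) auto
  qed
next
  show "finsums X (mnil_terms M X) \<subseteq> MNil_star M X"
  proof
    fix x assume x: "x \<in> finsums X (mnil_terms M X)"
    then obtain n g where g: "\<forall>i<n. g i \<in> mnil_terms M X" "x = msum X g n"
      unfolding finsums_def by blast
    then have "\<forall>i<n. \<exists>r f m y. g i = msmult X r (f m) \<and> m \<in> mcarrier M \<and> y \<in> mcarrier X \<and>
        mhom M (cyclic_sub X y) f \<and> snil_pair X r (f m)"
      unfolding mnil_terms_def by blast
    then obtain r f m y where A: "\<forall>i<n. g i = msmult X (r i) (f i (m i)) \<and> m i \<in> mcarrier M \<and>
        y i \<in> mcarrier X \<and> mhom M (cyclic_sub X (y i)) (f i) \<and> snil_pair X (r i) (f i (m i))"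
      by metis
    have "x = msum X (\<lambda>i. msmult X (r i) (f i (m i))) n" unfolding g(2) by (rule msum_cong) (use A in auto)
    moreover have "x \<in> mcarrier X"
      using x finsums_carrier[OF X] mnil_terms_nil_terms[OF X] nil_terms_carrier[OF X] by blast
    ultimately show "x \<in> MNil_star M X" using A unfolding MNil_star_def
      by (intro CollectI conjI exI[of _ n] exI[of _ r] exI[of _ m] exI[of _ y] exI[of _ f]) auto
  qed
qed

section \<open>Building modules by transport of structure\<close>

lemma lmodule_image:
  assumes X: "lmodule X" and C: "mcarrier Y = \<phi> ` mcarrier X" and Z: "mzero Y = \<phi> (mzero X)"
    and A: "\<And>a b. a \<in> mcarrier X \<Longrightarrow> b \<in> mcarrier X \<Longrightarrow> madd Y (\<phi> a) (\<phi> b) = \<phi> (madd X a b)"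
    and S: "\<And>r a. a \<in> mcarrier X \<Longrightarrow> msmult Y r (\<phi> a) = \<phi> (msmult X r a)"
  shows "lmodule Y \<and> mhom X Y \<phi>"
proof -
  let ?C = "\<phi> ` mcarrier X"
  have inv: "\<forall>x\<in>?C. \<exists>y\<in>?C. madd Y x y = mzero Y"
  proof
    fix x assume "x \<in> ?C"
    then obtain a where a: "a \<in> mcarrier X" "x = \<phi> a" by blast
    have "madd Y x (\<phi> (msmult X (-1) a)) = mzero Y"
      using A[OF a(1) lm_smult[OF X a(1)]] lm_neg[OF X a(1)] Z a by simp
    then show "\<exists>y\<in>?C. madd Y x y = mzero Y" using lm_smult[OF X a(1)] by blast
  qed
  have "mzero Y \<in> ?C" "\<forall>x\<in>?C. \<forall>y\<in>?C. madd Y x y \<in> ?C" "\<forall>r. \<forall>x\<in>?C. msmult Y r x \<in> ?C"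
    "\<forall>x\<in>?C. \<forall>y\<in>?C. \<forall>z\<in>?C. madd Y (madd Y x y) z = madd Y x (madd Y y z)"
    "\<forall>x\<in>?C. \<forall>y\<in>?C. madd Y x y = madd Y y x" "\<forall>x\<in>?C. madd Y (mzero Y) x = x"
    "\<forall>r. \<forall>x\<in>?C. \<forall>y\<in>?C. msmult Y r (madd Y x y) = madd Y (msmult Y r x) (msmult Y r y)"
    "\<forall>r s. \<forall>x\<in>?C. msmult Y (r + s) x = madd Y (msmult Y r x) (msmult Y s x)"
    "\<forall>r s. \<forall>x\<in>?C. msmult Y (r * s) x = msmult Y r (msmult Y s x)"
    "\<forall>x\<in>?C. msmult Y 1 x = x"
    using A S Z lm_zero[OF X] lm_add[OF X] lm_smult[OF X] lm_assoc[OF X] lm_comm[OF X] lm_lzero[OF X]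
      lm_smult_add[OF X] lm_add_smult[OF X] lm_smult_assoc[OF X] lm_one[OF X] by auto
  then have "lmodule Y" unfolding lmodule_def C using inv by blast
  moreover have "mhom X Y \<phi>" unfolding mhom_def C using A S by auto
  ultimately show ?thesis by blast
qed

definition coset :: "('r::ring_1, 'a) lmod \<Rightarrow> 'a set \<Rightarrow> 'a \<Rightarrow> 'a set" where
  "coset X K a = {z \<in> mcarrier X. \<exists>k\<in>K. z = madd X a k}"

definition quot :: "('r::ring_1, 'a) lmod \<Rightarrow> 'a set \<Rightarrow> ('r, 'a set) lmod" where
  "quot X K = \<lparr>mcarrier = coset X K ` mcarrier X,
     madd = (\<lambda>C D. coset X K (madd X (SOME c. c \<in> C) (SOME d. d \<in> D))),
     mzero = K,
     msmult = (\<lambda>r C. coset X K (msmult X r (SOME c. c \<in> C)))\<rparr>"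

context
  fixes X :: "('r::ring_1, 'a) lmod" and K
  assumes X: "lmodule X" and K: "submod X K"
begin

lemma K_sub: "K \<subseteq> mcarrier X" and K_zero: "mzero X \<in> K"
  and K_add: "a \<in> K \<Longrightarrow> b \<in> K \<Longrightarrow> madd X a b \<in> K" and K_smult: "a \<in> K \<Longrightarrow> msmult X r a \<in> K"
  using K unfolding submod_def by blast+

lemma coset_mem: "a \<in> mcarrier X \<Longrightarrow> a \<in> coset X K a"
  unfolding coset_def using K_zero lm_rzero[OF X] by force

lemma coset_shift:
  assumes a: "a \<in> mcarrier X" and k: "k \<in> K"
  shows "coset X K (madd X a k) = coset X K a"
proof -
  have kc: "k \<in> mcarrier X" using k K_sub by blast
  have "z \<in> coset X K a" if z: "z \<in> coset X K (madd X a k)" for z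
  proof -
    obtain k' where k': "k' \<in> K" "z = madd X (madd X a k) k'" "z \<in> mcarrier X"
      using z unfolding coset_def by blast
    then have "z = madd X a (madd X k k')" using lm_assoc[OF X a kc] K_sub by blast
    then show ?thesis unfolding coset_def using K_add k k' by blast
  qed
  moreover have "z \<in> coset X K (madd X a k)" if z: "z \<in> coset X K a" for z
  proof -
    obtain k' where k': "k' \<in> K" "z = madd X a k'" "z \<in> mcarrier X"
      using z unfolding coset_def by blast
    let ?m = "msmult X (-1) k"
    have k'c: "k' \<in> mcarrier X" and mc: "?m \<in> mcarrier X" using k' K_sub lm_smult[OF X kc] by auto
    have "madd X (madd X a k) (madd X ?m k') = madd X a (madd X (madd X k ?m) k')"
      using a kc mc k'c by (simp add: lm_assoc[OF X] lm_add[OF X])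
    also have "\<dots> = z" using lm_neg[OF X kc] lm_lzero[OF X k'c] k' by simp
    finally show ?thesis unfolding coset_def using K_add K_smult k k' by blast
  qed
  ultimately show ?thesis by blast
qed

lemma coset_some:
  assumes a: "a \<in> mcarrier X"
  shows "\<exists>k\<in>K. (SOME c. c \<in> coset X K a) = madd X a k"
proof -
  have "(SOME c. c \<in> coset X K a) \<in> coset X K a" using coset_mem[OF a] by (rule someI)
  then show ?thesis unfolding coset_def by blast
qed

lemma coset_zero: "coset X K (mzero X) = K"
  unfolding coset_def using K_sub lm_lzero[OF X] by force

lemma quot_add:
  assumes a: "a \<in> mcarrier X" and b: "b \<in> mcarrier X"
  shows "madd (quot X K) (coset X K a) (coset X K b) = coset X K (madd X a b)"
proof -
  obtain k1 k2 where k: "k1 \<in> K" "(SOME c. c \<in> coset X K a) = madd X a k1"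
    "k2 \<in> K" "(SOME c. c \<in> coset X K b) = madd X b k2" using coset_some a b by blast
  have "madd (quot X K) (coset X K a) (coset X K b) = coset X K (madd X (madd X a k1) (madd X b k2))"
    unfolding quot_def using k by simp
  also have "madd X (madd X a k1) (madd X b k2) = madd X (madd X a b) (madd X k1 k2)"
    using lm_swap[OF X a _ b] k K_sub by blast
  also have "coset X K \<dots> = coset X K (madd X a b)"
    using coset_shift lm_add[OF X a b] K_add k by blast
  finally show ?thesis .
qed

lemma quot_smult:
  assumes a: "a \<in> mcarrier X"
  shows "msmult (quot X K) r (coset X K a) = coset X K (msmult X r a)"
proof -
  obtain k where k: "k \<in> K" "(SOME c. c \<in> coset X K a) = madd X a k" using coset_some[OF a] by blast
  have "msmult (quot X K) r (coset X K a) = coset X K (msmult X r (madd X a k))"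
    unfolding quot_def using k by simp
  also have "msmult X r (madd X a k) = madd X (msmult X r a) (msmult X r k)"
    using lm_smult_add[OF X a] k K_sub by blast
  also have "coset X K \<dots> = coset X K (msmult X r a)"
    using coset_shift lm_smult[OF X a] K_smult k by blast
  finally show ?thesis .
qed

lemma quot_zero: "mzero (quot X K) = K"
  unfolding quot_def by simp

lemma lmodule_quot: "lmodule (quot X K)" and mhom_quot: "mhom X (quot X K) (coset X K)"
  using lmodule_image[OF X, of "quot X K" "coset X K"] quot_add quot_smult coset_zero
  by (auto simp: quot_def)

end

definition transport :: "('r::ring_1, 'a) lmod \<Rightarrow> ('a \<Rightarrow> 'b) \<Rightarrow> ('r, 'b) lmod" where
  "transport X e = \<lparr>mcarrier = e ` mcarrier X,
     madd = (\<lambda>a b. e (madd X (inv_into (mcarrier X) e a) (inv_into (mcarrier X) e b))),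
     mzero = e (mzero X),
     msmult = (\<lambda>r a. e (msmult X r (inv_into (mcarrier X) e a)))\<rparr>"

lemma transport_carrier: "mcarrier (transport X e) = e ` mcarrier X"
  by (simp add: transport_def)

lemma lmodule_transport: "lmodule X \<Longrightarrow> inj_on e (mcarrier X) \<Longrightarrow> lmodule (transport X e)"
  and mhom_transport: "lmodule X \<Longrightarrow> inj_on e (mcarrier X) \<Longrightarrow> mhom X (transport X e) e"
  using lmodule_image[of X "transport X e" e] by (auto simp: transport_def)

lemma mhom_transport_inv:
  assumes X: "lmodule X" and inj: "inj_on e (mcarrier X)"
  shows "mhom (transport X e) X (inv_into (mcarrier X) e)"
  unfolding mhom_def transport_def using inj lm_add[OF X] lm_smult[OF X] by (auto simp: inv_into_into)

section \<open>The category \<open>\<sigma>[M]\<close> and projectivity\<close>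

lemma mgenerated_self:
  assumes M: "lmodule M"
  shows "mgenerated M M"
  unfolding mgenerated_def
proof
  fix g assume g: "g \<in> mcarrier M"
  have "mhom M M id" unfolding mhom_def by simp
  moreover have "g = msum M (\<lambda>i. id g) 1" using lm_lzero[OF M g] by simp
  ultimately show "\<exists>n fs ms. (\<forall>i<n. mhom M M (fs i) \<and> ms i \<in> mcarrier M) \<and> g = msum M (\<lambda>i. fs i (ms i)) n"
    using g by (intro exI[of _ 1] exI[of _ "\<lambda>i. id"] exI[of _ "\<lambda>i. g"]) auto
qed

lemma mgenerated_hom:
  assumes X: "lmodule X" and Y: "lmodule Y" and gen: "mgenerated M X"
    and h: "mhom X Y \<phi>" and s: "mcarrier Y \<subseteq> \<phi> ` mcarrier X"
  shows "mgenerated M Y"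
  unfolding mgenerated_def
proof
  fix g assume "g \<in> mcarrier Y"
  then obtain x where x: "x \<in> mcarrier X" "g = \<phi> x" using s by blast
  then obtain n fs ms where F: "\<forall>i<n. mhom M X (fs i) \<and> ms i \<in> mcarrier M" "x = msum X (\<lambda>i. fs i (ms i)) n"
    using gen unfolding mgenerated_def by blast
  have "g = msum Y (\<lambda>i. \<phi> (fs i (ms i))) n"
    unfolding x(2) F(2) by (rule mhom_msum[OF X Y h]) (use F(1) in \<open>auto simp: mhom_def\<close>)
  moreover have "\<forall>i<n. mhom M Y (\<phi> \<circ> fs i) \<and> ms i \<in> mcarrier M" using F(1) h mhom_comp by blast
  ultimately show "\<exists>n fs ms. (\<forall>i<n. mhom M Y (fs i) \<and> ms i \<in> mcarrier M) \<and> g = msum Y (\<lambda>i. fs i (ms i)) n"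
    by (intro exI[of _ n] exI[of _ "\<lambda>i. \<phi> \<circ> fs i"] exI[of _ ms]) auto
qed

lemma in_sigma_transport:
  assumes X: "lmodule X" and G: "lmodule G" and gen: "mgenerated M G"
    and \<iota>: "mhom X G \<iota>" "inj_on \<iota> (mcarrier X)" and enc: "inj_on enc (mcarrier G)"
  shows "in_sigma M (transport X (enc \<circ> \<iota>))"
proof -
  let ?e = "enc \<circ> \<iota>"
  have \<iota>X: "\<iota> ` mcarrier X \<subseteq> mcarrier G" using \<iota>(1) unfolding mhom_def by blast
  have inj: "inj_on ?e (mcarrier X)" using comp_inj_on[OF \<iota>(2) inj_on_subset[OF enc \<iota>X]] .
  have G': "lmodule (transport G enc)" and hG: "mhom G (transport G enc) enc"
    using lmodule_transport[OF G enc] mhom_transport[OF G enc] .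
  have gen': "mgenerated M (transport G enc)" using mgenerated_hom[OF G G' gen hG] by (simp add: transport_carrier)
  have "mhom (transport X ?e) (transport G enc) (?e \<circ> inv_into (mcarrier X) ?e)"
    using mhom_comp[OF mhom_transport_inv[OF X inj] mhom_comp[OF \<iota>(1) hG]] .
  then have emb: "mhom (transport X ?e) (transport G enc) id"
  proof (rule mhom_cong[OF lmodule_transport[OF X inj]])
    fix a assume "a \<in> mcarrier (transport X ?e)"
    then show "(?e \<circ> inv_into (mcarrier X) ?e) a = id a"
      using f_inv_into_f[of a ?e "mcarrier X"] by (simp add: transport_carrier)
  qed
  show ?thesis unfolding in_sigma_def
    by (intro conjI exI[of _ "transport G enc"] exI[of _ id] lmodule_transport[OF X inj] G' gen' emb) simp
qed

text \<open>Projectivity of \<open>M\<close> is formulated for modules whose elements are sets of elements of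
  \<open>M\<close>; it transfers to modules of any type that have copies of this kind in \<open>\<sigma>[M]\<close>.\<close>

lemma proj_sigma_lift:
  fixes M :: "('r::ring_1, 'm) lmod" and A :: "('r, 'a) lmod" and B :: "('r, 'b) lmod"
    and eA :: "'a \<Rightarrow> 'm set" and eB :: "'b \<Rightarrow> 'm set"
  assumes P: "proj_sigma M TYPE('m set)" and A: "lmodule A" and B: "lmodule B"
    and eA: "inj_on eA (mcarrier A)" "in_sigma M (transport A eA)"
    and eB: "inj_on eB (mcarrier B)" "in_sigma M (transport B eB)"
    and g: "mhom A B g" "g ` mcarrier A = mcarrier B" and f: "mhom M B f"
  shows "\<exists>h. mhom M A h \<and> (\<forall>m\<in>mcarrier M. g (h m) = f m)"
proof -
  define iv where "iv = inv_into (mcarrier A) eA"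
  have iv: "mhom (transport A eA) A iv" unfolding iv_def using mhom_transport_inv[OF A eA(1)] .
  have g': "mhom (transport A eA) (transport B eB) (eB \<circ> g \<circ> iv)"
    using mhom_comp[OF mhom_comp[OF iv g(1)] mhom_transport[OF B eB(1)]] by (simp add: comp_assoc)
  have "(eB \<circ> g \<circ> iv) ` mcarrier (transport A eA) = (eB \<circ> g) ` mcarrier A"
    unfolding transport_carrier image_image iv_def by (rule image_cong) (simp_all add: inv_into_f_f[OF eA(1)])
  then have surj: "(eB \<circ> g \<circ> iv) ` mcarrier (transport A eA) = mcarrier (transport B eB)"
    using g(2) image_image[of eB g "mcarrier A"] unfolding transport_carrier by simp
  have f': "mhom M (transport B eB) (eB \<circ> f)" using mhom_comp[OF f mhom_transport[OF B eB(1)]] .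
  have "\<exists>h. mhom M (transport A eA) h \<and> (\<forall>m\<in>mcarrier M. (eB \<circ> g \<circ> iv) (h m) = (eB \<circ> f) m)"
    using P eA(2) eB(2) g' surj f' unfolding proj_sigma_def by blast
  then obtain h where h: "mhom M (transport A eA) h" "\<forall>m\<in>mcarrier M. eB (g (iv (h m))) = eB (f m)"
    by auto
  have "g (iv (h m)) = f m" if m: "m \<in> mcarrier M" for m
  proof -
    have "iv (h m) \<in> mcarrier A" using h(1) iv m unfolding mhom_def by blast
    then have "g (iv (h m)) \<in> mcarrier B" "f m \<in> mcarrier B" using g(1) f m unfolding mhom_def by blast+
    then show ?thesis using h(2) m eB(1) unfolding inj_on_def by blast
  qed
  then show ?thesis using mhom_comp[OF h(1) iv] by auto
qed

section \<open>First equality: \<open>Nil_*(M) = Nil_*(M) \<cdot> M\<close>\<close>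

lemma lift_through_quotient:
  fixes M :: "('r::ring_1, 'm) lmod"
  assumes M: "lmodule M" and P: "proj_sigma M TYPE('m set)" and K: "submod M K"
    and f: "mhom M (quot M K) f"
  shows "\<exists>e. mhom M M e \<and> (\<forall>m\<in>mcarrier M. coset M K (e m) = f m)"
proof (rule proj_sigma_lift[OF P M lmodule_quot[OF M K]])
  have "inj_on (\<lambda>m. {m}) (mcarrier M)" by (simp add: inj_on_def)
  then show "in_sigma M (transport M (\<lambda>m. {m}))"
    using in_sigma_transport[OF M M mgenerated_self[OF M], of id "\<lambda>m. {m}"] by (simp add: mhom_def)
  have Q: "lmodule (quot M K)" using lmodule_quot[OF M K] .
  have "mgenerated M (quot M K)"
    by (rule mgenerated_hom[OF M Q mgenerated_self[OF M] mhom_quot[OF M K]]) (simp add: quot_def)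
  then show "in_sigma M (transport (quot M K) id)"
    using in_sigma_transport[OF Q Q, of M id id] by (simp add: mhom_def)
  show "coset M K ` mcarrier M = mcarrier (quot M K)" by (simp add: quot_def)
qed (use f mhom_quot[OF M K] in \<open>simp_all add: inj_on_def\<close>)

text \<open>Every homomorphism from \<open>M\<close> to \<open>M/Nil_*(M)\<close> vanishes on \<open>Nil_*(M)\<close>: it lifts to an
  endomorphism, and endomorphisms preserve \<open>Nil_*(M)\<close>. Hence the quotient map is one of the
  maps in the definition of \<open>Nil_*(M) \<cdot> M\<close>, whose kernel is \<open>Nil_*(M)\<close>.\<close>

theorem Nil_star_product:
  fixes M :: "('r::ring_1, 'm) lmod"
  assumes M: "lmodule M" and P: "proj_sigma M TYPE('m set)"
  shows "Nil_star M = mprod M (Nil_star M) M"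
proof
  show "Nil_star M \<subseteq> mprod M (Nil_star M) M"
    unfolding mprod_def using Nil_star_finsums[OF M] finsums_carrier[OF M nil_terms_carrier[OF M]]
    by auto
next
  let ?K = "Nil_star M"
  have K: "submod M ?K" using submod_Nil_star[OF M] .
  have K_M: "?K \<subseteq> mcarrier M" using K unfolding submod_def by blast
  have kill: "f n = mzero (quot M ?K)" if f: "mhom M (quot M ?K) f" and n: "n \<in> ?K" for f n
  proof -
    obtain e where e: "mhom M M e" "\<forall>m\<in>mcarrier M. coset M ?K (e m) = f m"
      using lift_through_quotient[OF M P K f] by blast
    have en: "e n \<in> ?K" using Nil_star_hom[OF M e(1) n] .
    have "f n = coset M ?K (e n)" using e(2) n K_M by auto
    also have "\<dots> = coset M ?K (madd M (mzero M) (e n))" using lm_lzero[OF M] en K_M by auto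
    also have "\<dots> = ?K" using coset_shift[OF M K lm_zero[OF M] en] coset_zero[OF M K] by simp
    finally show ?thesis using quot_zero[OF M K] by simp
  qed
  show "mprod M ?K M \<subseteq> ?K"
  proof
    fix x assume x: "x \<in> mprod M ?K M"
    then have "x \<in> mcarrier M" unfolding mprod_def by blast
    moreover have "coset M ?K x = ?K"
      using x kill lmodule_quot[OF M K] mhom_quot[OF M K] quot_zero[OF M K] unfolding mprod_def by blast
    ultimately show "x \<in> ?K" using coset_mem[OF M K] by blast
  qed
qed

section \<open>Direct sums of submodules of \<open>M\<close>\<close>

text \<open>The additive monoid of a module, so that the carrier-relative finite sums
  \<open>finprod\<close> of HOL-Algebra are available.\<close>

definition add_monoid :: "('r, 'a) lmod \<Rightarrow> 'a monoid" where
  "add_monoid X = \<lparr>carrier = mcarrier X, mult = madd X, one = mzero X\<rparr>"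

lemma add_monoid_simps [simp]:
  "carrier (add_monoid X) = mcarrier X" "mult (add_monoid X) = madd X" "one (add_monoid X) = mzero X"
  by (simp_all add: add_monoid_def)

lemma comm_monoid_add_monoid:
  assumes X: "lmodule X"
  shows "comm_monoid (add_monoid X)"
proof (rule comm_monoidI)
  fix x y z assume "x \<in> carrier (add_monoid X)" "y \<in> carrier (add_monoid X)" "z \<in> carrier (add_monoid X)"
  then show "x \<otimes>\<^bsub>add_monoid X\<^esub> y \<otimes>\<^bsub>add_monoid X\<^esub> z = x \<otimes>\<^bsub>add_monoid X\<^esub> (y \<otimes>\<^bsub>add_monoid X\<^esub> z)"
    using lm_assoc[OF X] by simp
next
  fix x y assume "x \<in> carrier (add_monoid X)" "y \<in> carrier (add_monoid X)"
  then show "x \<otimes>\<^bsub>add_monoid X\<^esub> y = y \<otimes>\<^bsub>add_monoid X\<^esub> x" using lm_comm[OF X] by simp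
qed (use X in \<open>auto simp: lm_add lm_zero lm_lzero\<close>)

lemma finprod_empty_add_monoid: "lmodule X \<Longrightarrow> finprod (add_monoid X) u {} = mzero X"
  using comm_monoid.finprod_empty[OF comm_monoid_add_monoid] by (metis add_monoid_simps(3))

lemma finprod_smult:
  assumes X: "lmodule X" and F: "finite F" and u: "\<And>i. i \<in> F \<Longrightarrow> u i \<in> mcarrier X"
  shows "msmult X r (finprod (add_monoid X) u F) = finprod (add_monoid X) (\<lambda>i. msmult X r (u i)) F"
  using F u
proof (induction F rule: finite_induct)
  case empty
  then show ?case by (simp add: finprod_empty_add_monoid[OF X] lm_smult_zero[OF X])
next
  case (insert a F)
  note CM = comm_monoid_add_monoid[OF X]
  have "finprod (add_monoid X) u (insert a F) = madd X (u a) (finprod (add_monoid X) u F)"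
    using comm_monoid.finprod_insert[OF CM insert(1,2)] insert(4) by (auto simp: Pi_def)
  moreover have "finprod (add_monoid X) (\<lambda>i. msmult X r (u i)) (insert a F) =
      madd X (msmult X r (u a)) (finprod (add_monoid X) (\<lambda>i. msmult X r (u i)) F)"
    using comm_monoid.finprod_insert[OF CM insert(1,2)] insert(4) lm_smult[OF X] by (auto simp: Pi_def)
  moreover have "finprod (add_monoid X) u F \<in> mcarrier X"
    using comm_monoid.finprod_closed[OF CM, of u F] insert(4) by (auto simp: Pi_def)
  ultimately show ?case using insert lm_smult_add[OF X] by simp
qed

lemma msum_finprod:
  assumes X: "lmodule X" and f: "\<And>i. i < n \<Longrightarrow> f i \<in> mcarrier X"
  shows "finprod (add_monoid X) f {..<n} = msum X f n"
  using f
proof (induction n)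
  case 0
  then show ?case by (simp add: finprod_empty_add_monoid[OF X])
next
  case (Suc n)
  note CM = comm_monoid_add_monoid[OF X]
  have "finprod (add_monoid X) f {..<Suc n} = madd X (f n) (finprod (add_monoid X) f {..<n})"
    unfolding lessThan_Suc using comm_monoid.finprod_insert[OF CM, of "{..<n}" n f] Suc.prems
    by (auto simp: Pi_def)
  then show ?case using Suc lm_comm[OF X] msum_closed[OF X, of n f] by simp
qed

definition dsum :: "('r::ring_1, 'm) lmod \<Rightarrow> 'i set \<Rightarrow> ('i \<Rightarrow> 'm set) \<Rightarrow> ('r, 'i \<Rightarrow> 'm) lmod" where
  "dsum M I N = \<lparr>mcarrier = {u. (\<forall>i\<in>I. u i \<in> N i) \<and> (\<forall>i. i \<notin> I \<longrightarrow> u i = mzero M) \<and>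
       finite {i. u i \<noteq> mzero M}},
     madd = (\<lambda>u v i. madd M (u i) (v i)),
     mzero = (\<lambda>i. mzero M),
     msmult = (\<lambda>r u i. msmult M r (u i))\<rparr>"

lemma dsum_simps:
  "madd (dsum M I N) = (\<lambda>u v i. madd M (u i) (v i))" "mzero (dsum M I N) = (\<lambda>i. mzero M)"
  "msmult (dsum M I N) = (\<lambda>r u i. msmult M r (u i))"
  "mcarrier (dsum M I N) = {u. (\<forall>i\<in>I. u i \<in> N i) \<and> (\<forall>i. i \<notin> I \<longrightarrow> u i = mzero M) \<and>
     finite {i. u i \<noteq> mzero M}}"
  by (simp_all add: dsum_def)

definition gsum :: "('r::ring_1, 'm) lmod \<Rightarrow> ('i \<Rightarrow> 'm) \<Rightarrow> 'm" where
  "gsum M u = finprod (add_monoid M) u {i. u i \<noteq> mzero M}"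

context
  fixes M :: "('r::ring_1, 'm) lmod" and I :: "'i set" and N
  assumes M: "lmodule M" and N: "\<And>i. i \<in> I \<Longrightarrow> submod M (N i)"
begin

lemma dsum_val:
  assumes u: "u \<in> mcarrier (dsum M I N)"
  shows "u i \<in> mcarrier M"
proof (cases "i \<in> I")
  case True
  then show ?thesis using u N unfolding dsum_simps submod_def by blast
next
  case False
  then show ?thesis using u lm_zero[OF M] unfolding dsum_simps by auto
qed

lemma lmodule_dsum: "lmodule (dsum M I N)"
proof -
  let ?D = "dsum M I N" let ?C = "mcarrier (dsum M I N)"
  have z0: "madd M (mzero M) (mzero M) = mzero M" using lm_lzero[OF M lm_zero[OF M]] .
  have s0: "msmult M r (mzero M) = mzero M" for r using lm_smult_zero[OF M] .
  have add: "madd ?D x y \<in> ?C" if "x \<in> ?C" "y \<in> ?C" for x y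
  proof -
    have "{i. madd M (x i) (y i) \<noteq> mzero M} \<subseteq> {i. x i \<noteq> mzero M} \<union> {i. y i \<noteq> mzero M}"
      using z0 by auto
    then show ?thesis using that N z0 unfolding dsum_simps submod_def by (auto intro: finite_subset)
  qed
  have smult: "msmult ?D r x \<in> ?C" if "x \<in> ?C" for r x
  proof -
    have "{i. msmult M r (x i) \<noteq> mzero M} \<subseteq> {i. x i \<noteq> mzero M}" using s0 by auto
    then show ?thesis using that N s0 unfolding dsum_simps submod_def by (auto intro: finite_subset)
  qed
  have inv: "\<forall>x\<in>?C. \<exists>y\<in>?C. madd ?D x y = mzero ?D"
  proof
    fix x assume x: "x \<in> ?C"
    have "madd ?D x (msmult ?D (-1) x) = mzero ?D"
      using dsum_val[OF x] lm_neg[OF M] unfolding dsum_simps by (simp add: fun_eq_iff)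
    then show "\<exists>y\<in>?C. madd ?D x y = mzero ?D" using smult[OF x] by blast
  qed
  have "mzero ?D \<in> ?C" using N unfolding dsum_simps submod_def by auto
  moreover have "\<forall>x\<in>?C. \<forall>y\<in>?C. \<forall>z\<in>?C. madd ?D (madd ?D x y) z = madd ?D x (madd ?D y z)"
    "\<forall>x\<in>?C. \<forall>y\<in>?C. madd ?D x y = madd ?D y x" "\<forall>x\<in>?C. madd ?D (mzero ?D) x = x"
    "\<forall>r. \<forall>x\<in>?C. \<forall>y\<in>?C. msmult ?D r (madd ?D x y) = madd ?D (msmult ?D r x) (msmult ?D r y)"
    "\<forall>r s. \<forall>x\<in>?C. msmult ?D (r + s) x = madd ?D (msmult ?D r x) (msmult ?D s x)"
    "\<forall>r s. \<forall>x\<in>?C. msmult ?D (r * s) x = msmult ?D r (msmult ?D s x)" "\<forall>x\<in>?C. msmult ?D 1 x = x"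
    using dsum_val lm_assoc[OF M] lm_comm[OF M] lm_lzero[OF M] lm_smult_add[OF M] lm_add_smult[OF M]
      lm_smult_assoc[OF M] lm_one[OF M]
    unfolding dsum_simps(1-3) by (simp_all add: fun_eq_iff)
  ultimately show ?thesis unfolding lmodule_def using add smult inv by blast
qed

lemma gsum_eq:
  assumes u: "u \<in> mcarrier (dsum M I N)" and F: "finite F" "{i. u i \<noteq> mzero M} \<subseteq> F"
  shows "gsum M u = finprod (add_monoid M) u F"
  unfolding gsum_def
  by (rule comm_monoid.finprod_mono_neutral_cong_left[OF comm_monoid_add_monoid[OF M] F])
     (use dsum_val[OF u] in auto)

lemma gsum_closed: "u \<in> mcarrier (dsum M I N) \<Longrightarrow> gsum M u \<in> mcarrier M"
  unfolding gsum_def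
  using comm_monoid.finprod_closed[OF comm_monoid_add_monoid[OF M], of u "{i. u i \<noteq> mzero M}"] dsum_val
  by (auto simp: Pi_def)

lemma gsum_hom:
  "lmodule (sub M (gsum M ` mcarrier (dsum M I N))) \<and> mhom (dsum M I N) (sub M (gsum M ` mcarrier (dsum M I N))) (gsum M)"
proof (rule lmodule_image[OF lmodule_dsum])
  show "mzero (sub M (gsum M ` mcarrier (dsum M I N))) = gsum M (mzero (dsum M I N))"
    unfolding gsum_def dsum_simps by (simp add: finprod_empty_add_monoid[OF M])
next
  fix a b assume a: "a \<in> mcarrier (dsum M I N)" and b: "b \<in> mcarrier (dsum M I N)"
  define F where "F = {i. a i \<noteq> mzero M} \<union> {i. b i \<noteq> mzero M}"
  have F: "finite F" using a b unfolding F_def dsum_simps by auto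
  have ab: "madd (dsum M I N) a b \<in> mcarrier (dsum M I N)" using lmodule_dsum a b by (rule lm_add)
  have "{i. madd (dsum M I N) a b i \<noteq> mzero M} \<subseteq> F"
    using lm_lzero[OF M lm_zero[OF M]] unfolding F_def dsum_simps by auto
  then have "gsum M (madd (dsum M I N) a b) = finprod (add_monoid M) (\<lambda>i. madd M (a i) (b i)) F"
    using gsum_eq[OF ab F] unfolding dsum_simps by simp
  also have "\<dots> = madd M (finprod (add_monoid M) a F) (finprod (add_monoid M) b F)"
    using comm_monoid.finprod_multf[OF comm_monoid_add_monoid[OF M], of a F b] dsum_val a b
    by (auto simp: Pi_def)
  also have "\<dots> = madd M (gsum M a) (gsum M b)"
    using gsum_eq[OF a F] gsum_eq[OF b F] unfolding F_def by auto
  finally show "madd (sub M (gsum M ` mcarrier (dsum M I N))) (gsum M a) (gsum M b) =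
      gsum M (madd (dsum M I N) a b)" by simp
next
  fix r a assume a: "a \<in> mcarrier (dsum M I N)"
  define F where "F = {i. a i \<noteq> mzero M}"
  have F: "finite F" using a unfolding F_def dsum_simps by auto
  have ra: "msmult (dsum M I N) r a \<in> mcarrier (dsum M I N)" using lmodule_dsum a by (rule lm_smult)
  have "{i. msmult (dsum M I N) r a i \<noteq> mzero M} \<subseteq> F"
    using lm_smult_zero[OF M] unfolding F_def dsum_simps by auto
  then have "gsum M (msmult (dsum M I N) r a) = finprod (add_monoid M) (\<lambda>i. msmult M r (a i)) F"
    using gsum_eq[OF ra F] unfolding dsum_simps by simp
  also have "\<dots> = msmult M r (gsum M a)"
    using finprod_smult[OF M F] dsum_val[OF a] unfolding gsum_def F_def by simp
  finally show "msmult (sub M (gsum M ` mcarrier (dsum M I N))) r (gsum M a) = gsum M (msmult (dsum M I N) r a)"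
    by simp
qed simp

lemma gsum_as_msum:
  assumes u: "u \<in> mcarrier (dsum M I N)"
  shows "\<exists>n b. (\<forall>k<n. b k \<in> I) \<and> gsum M u = msum M (\<lambda>k. u (b k)) n"
proof -
  define F where "F = {i. u i \<noteq> mzero M}"
  have F: "finite F" and FI: "F \<subseteq> I" using u unfolding F_def dsum_simps by auto
  obtain b where b: "bij_betw b {..<card F} F"
    using ex_bij_betw_nat_finite[OF F] by (auto simp: atLeast0LessThan)
  have "gsum M u = finprod (add_monoid M) u (b ` {..<card F})"
    using gsum_eq[OF u F] b unfolding F_def bij_betw_def by simp
  also have "\<dots> = finprod (add_monoid M) (\<lambda>k. u (b k)) {..<card F}"
    using comm_monoid.finprod_reindex[OF comm_monoid_add_monoid[OF M], of u b "{..<card F}"] b dsum_val[OF u]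
    unfolding bij_betw_def by (simp add: Pi_def)
  also have "\<dots> = msum M (\<lambda>k. u (b k)) (card F)" by (rule msum_finprod[OF M]) (rule dsum_val[OF u])
  finally show ?thesis using bij_betw_apply[OF b] FI by blast
qed

lemma mhom_component:
  assumes h: "mhom Y (dsum M I N) h" and i: "i \<in> I"
  shows "mhom Y (sub M (N i)) (\<lambda>y. h y i)"
  using h i unfolding mhom_def dsum_simps by auto

end

text \<open>The direct sum of copies of \<open>M\<close> is \<open>M\<close>-generated: it is spanned by the images of the
  coordinate injections.\<close>

lemma mgenerated_dsum:
  fixes M :: "('r::ring_1, 'm) lmod" and I :: "'i set"
  assumes M: "lmodule M"
  shows "mgenerated M (dsum M I (\<lambda>_. mcarrier M))"
proof -
  let ?G = "dsum M I (\<lambda>_. mcarrier M)"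
  have G: "lmodule ?G" using lmodule_dsum[OF M submod_carrier[OF M]] .
  note val = dsum_val[OF M submod_carrier[OF M]]
  define io where "io i m = (\<lambda>j::'i. if j = i then m else mzero M)" for i and m :: 'm
  have io: "mhom M ?G (io i)" if i: "i \<in> I" for i
  proof -
    have "io i m \<in> mcarrier ?G" if "m \<in> mcarrier M" for m
    proof -
      have "{j. io i m j \<noteq> mzero M} \<subseteq> {i}" unfolding io_def by auto
      then show ?thesis using i that lm_zero[OF M] unfolding dsum_simps io_def by (auto intro: finite_subset)
    qed
    moreover have "io i (madd M x y) = madd ?G (io i x) (io i y)" for x y
      unfolding dsum_simps io_def using lm_lzero[OF M lm_zero[OF M]] by (auto simp: fun_eq_iff)
    moreover have "io i (msmult M r x) = msmult ?G r (io i x)" for r x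
      unfolding dsum_simps io_def using lm_smult_zero[OF M] by (auto simp: fun_eq_iff)
    ultimately show ?thesis unfolding mhom_def by blast
  qed
  have gen: "u \<in> finsums ?G (\<Union>i\<in>I. io i ` mcarrier M)"
    if "finite F" "u \<in> mcarrier ?G" "{i. u i \<noteq> mzero M} \<subseteq> F" for F u
    using that
  proof (induction F arbitrary: u rule: finite_induct)
    case empty
    then have "u = mzero ?G" unfolding dsum_simps by (auto simp: fun_eq_iff)
    then show ?case using finsums_zero by metis
  next
    case (insert i F)
    show ?case
    proof (cases "u i = mzero M")
      case True
      then show ?thesis using insert by auto
    next
      case False
      then have iI: "i \<in> I" using insert.prems(1) unfolding dsum_simps by auto
      define u' where "u' = u(i := mzero M)"
      have u'G: "u' \<in> mcarrier ?G" using insert.prems(1) lm_zero[OF M] unfolding dsum_simps u'_def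
        by (auto intro: finite_subset[of _ "{i. u i \<noteq> mzero M}"])
      have "{i. u' i \<noteq> mzero M} \<subseteq> F" using insert.prems(2) unfolding u'_def by auto
      then have u'S: "u' \<in> finsums ?G (\<Union>i\<in>I. io i ` mcarrier M)" using insert.IH u'G by blast
      have "u i \<in> mcarrier M" using val[OF insert.prems(1)] .
      then have "io i (u i) \<in> mcarrier ?G" "io i (u i) \<in> (\<Union>i\<in>I. io i ` mcarrier M)"
        using io[OF iI] iI unfolding mhom_def by blast+
      then have ioS: "io i (u i) \<in> finsums ?G (\<Union>i\<in>I. io i ` mcarrier M)"
        using lm_lzero[OF G]
        by (intro finsumsI[where n = 1 and g = "\<lambda>_. io i (u i)"]) auto
      have "u = madd ?G u' (io i (u i))"
        using val[OF insert.prems(1)] lm_rzero[OF M] lm_lzero[OF M]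
        unfolding dsum_simps u'_def io_def by (auto simp: fun_eq_iff)
      moreover have "(\<Union>i\<in>I. io i ` mcarrier M) \<subseteq> mcarrier ?G" using io unfolding mhom_def by blast
      ultimately show ?thesis using finsums_add[OF G _ u'S ioS] by simp
    qed
  qed
  show ?thesis unfolding mgenerated_def
  proof
    fix g assume g: "g \<in> mcarrier ?G"
    then have "g \<in> finsums ?G (\<Union>i\<in>I. io i ` mcarrier M)"
      using gen[of "{i. g i \<noteq> mzero M}" g] unfolding dsum_simps by blast
    then obtain n t where t: "\<forall>k<n. t k \<in> (\<Union>i\<in>I. io i ` mcarrier M)" "g = msum ?G t n"
      unfolding finsums_def by blast
    then have "\<forall>k<n. \<exists>c m. c \<in> I \<and> m \<in> mcarrier M \<and> t k = io c m" by blast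
    then obtain c m where cm: "\<forall>k<n. c k \<in> I \<and> m k \<in> mcarrier M \<and> t k = io (c k) (m k)"
      by metis
    have "g = msum ?G (\<lambda>k. io (c k) (m k)) n" unfolding t(2) by (rule msum_cong) (use cm in auto)
    moreover have "\<forall>k<n. mhom M ?G (io (c k)) \<and> m k \<in> mcarrier M" using cm io by blast
    ultimately show "\<exists>n fs ms. (\<forall>i<n. mhom M ?G (fs i) \<and> ms i \<in> mcarrier M) \<and>
        g = msum ?G (\<lambda>i. fs i (ms i)) n" by (intro exI[of _ n] exI[of _ "\<lambda>k. io (c k)"] exI[of _ m]) simp
  qed
qed

section \<open>Projectivity splits \<open>M\<close> into cyclic pieces\<close>

text \<open>For \<open>M\<close> projective in \<open>\<sigma>[M]\<close>, a homomorphism from \<open>M\<close> into the image of the summation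
  map \<open>\<Oplus>\<^sub>i N i \<rightarrow> M\<close> lifts to the direct sum, provided the direct sum of copies of \<open>M\<close>
  (which contains \<open>\<Oplus>\<^sub>i N i\<close> and is \<open>M\<close>-generated) has a copy among sets of elements of \<open>M\<close>.\<close>

lemma lift_through_sum:
  fixes M :: "('r::ring_1, 'm) lmod" and I :: "'i set" and enc :: "('i \<Rightarrow> 'm) \<Rightarrow> 'm set"
  assumes M: "lmodule M" and P: "proj_sigma M TYPE('m set)"
    and N: "\<And>i. i \<in> I \<Longrightarrow> submod M (N i)"
    and enc: "inj_on enc (mcarrier (dsum M I (\<lambda>_. mcarrier M)))"
    and f: "mhom M (sub M (gsum M ` mcarrier (dsum M I N))) f"
  shows "\<exists>h. mhom M (dsum M I N) h \<and> (\<forall>m\<in>mcarrier M. gsum M (h m) = f m)"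
proof -
  let ?D = "dsum M I N" and ?G = "dsum M I (\<lambda>_. mcarrier M)"
  let ?S = "sub M (gsum M ` mcarrier ?D)"
  have D: "lmodule ?D" using lmodule_dsum[of M I N, OF M N] .
  have G: "lmodule ?G" using lmodule_dsum[OF M submod_carrier[OF M]] .
  have S: "lmodule ?S" and g: "mhom ?D ?S (gsum M)" using gsum_hom[of M I N, OF M N] by blast+
  have DG: "mcarrier ?D \<subseteq> mcarrier ?G" using N unfolding dsum_simps submod_def by blast
  have DG_hom: "mhom ?D ?G id" using DG unfolding mhom_def dsum_simps by auto
  have sD: "in_sigma M (transport ?D (enc \<circ> id))"
    by (rule in_sigma_transport[OF D G mgenerated_dsum[OF M] DG_hom _ enc]) simp
  have SM: "mhom ?S M id" "inj_on id (mcarrier ?S)"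
    using gsum_closed[of M I N, OF M N] unfolding mhom_def by auto
  have sS: "in_sigma M (transport ?S ((\<lambda>m. {m}) \<circ> id))"
    by (rule in_sigma_transport[OF S M mgenerated_self[OF M] SM]) (simp add: inj_on_def)
  show ?thesis
  proof (rule proj_sigma_lift[OF P D S _ sD _ sS g _ f])
    show "inj_on (enc \<circ> id) (mcarrier ?D)" using inj_on_subset[OF enc DG] by simp
    show "inj_on ((\<lambda>m. {m}) \<circ> id) (mcarrier ?S)" by (simp add: inj_on_def)
  qed simp
qed

definition cyclic_split :: "('r::ring_1, 'm) lmod \<Rightarrow> 'm \<Rightarrow> bool" where
  "cyclic_split M x \<longleftrightarrow> (\<exists>n ys hs. (\<forall>j<n. ys j \<in> mcarrier M \<and> mhom M (cyclic_sub M (ys j)) (hs j)) \<and>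
     x = msum M (\<lambda>j. hs j x) n)"

lemma Nil_star_eq_MNil_star:
  assumes M: "lmodule M" and split: "\<And>x. x \<in> mcarrier M \<Longrightarrow> cyclic_split M x"
  shows "Nil_star M = MNil_star M M"
proof -
  have "nil_terms M \<subseteq> finsums M (mnil_terms M M)"
  proof
    fix t assume "t \<in> nil_terms M"
    then obtain a x where t: "t = msmult M a x" "x \<in> mcarrier M" "snil_pair M a x"
      unfolding nil_terms_def by blast
    obtain n ys hs where H: "\<forall>j<n. ys j \<in> mcarrier M \<and> mhom M (cyclic_sub M (ys j)) (hs j)"
      "x = msum M (\<lambda>j. hs j x) n" using split[OF t(2)] unfolding cyclic_split_def by blast
    have "\<And>j. j < n \<Longrightarrow> mhom M M (hs j)" using H(1) mhom_cyclic_into[OF M] by blast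
    then have hc: "\<And>j. j < n \<Longrightarrow> hs j x \<in> mcarrier M" using t(2) unfolding mhom_def by blast
    have "t = msum M (\<lambda>j. msmult M a (hs j x)) n"
      unfolding t(1) by (subst H(2)) (rule msum_smult[OF M hc])
    moreover have "msmult M a (hs j x) \<in> mnil_terms M M" if j: "j < n" for j
    proof -
      have Y: "lmodule (cyclic_sub M (ys j))" using lmodule_cyclic[OF M] H(1) j by blast
      have "snil_pair (cyclic_sub M (ys j)) a (hs j x)"
        using snil_hom[OF M Y _ t(2,3)] H(1) j by blast
      then have "snil_pair M a (hs j x)" unfolding snil_pair_def by (simp add: cyclic_sub_def)
      then show ?thesis using H(1) j t(2) unfolding mnil_terms_def by blast
    qed
    ultimately show "t \<in> finsums M (mnil_terms M M)" by (intro finsumsI) auto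
  qed
  moreover have "mnil_terms M M \<subseteq> mcarrier M"
    using mnil_terms_nil_terms[OF M] nil_terms_carrier[OF M] by (rule order_trans)
  ultimately have "finsums M (nil_terms M) \<subseteq> finsums M (mnil_terms M M)"
    using finsums_subset[OF M] by blast
  moreover have "finsums M (mnil_terms M M) \<subseteq> finsums M (nil_terms M)"
    using finsums_mono[OF mnil_terms_nil_terms[OF M]] .
  ultimately show ?thesis unfolding Nil_star_finsums[OF M] MNil_star_finsums[OF M] by blast
qed

subsection \<open>Infinite element type: one direct sum over all cyclic submodules\<close>

text \<open>If \<open>'m\<close> is infinite, \<open>'m \<times> 'm\<close> embeds into \<open>'m\<close>, so a function \<open>'m \<Rightarrow> 'm\<close> can be
  coded by (an injective image of) its graph.\<close>

lemma graph_encoding: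
  assumes inf: "infinite (UNIV :: 'm set)"
  shows "\<exists>enc :: ('m \<Rightarrow> 'm) \<Rightarrow> 'm set. inj enc"
proof -
  obtain p :: "'m \<times> 'm \<Rightarrow> 'm" where p: "bij_betw p (UNIV \<times> UNIV) UNIV"
    using card_of_Times_same_infinite[OF inf] card_of_ordIso[of "UNIV \<times> UNIV" "UNIV :: 'm set"] by auto
  then have injp: "inj p" unfolding bij_betw_def by simp
  have "inj (\<lambda>u. range (\<lambda>i. p (i, u i)))"
  proof (rule injI)
    fix u v :: "'m \<Rightarrow> 'm" assume e: "range (\<lambda>i. p (i, u i)) = range (\<lambda>i. p (i, v i))"
    have "u i = v i" for i
    proof -
      have "p (i, u i) \<in> range (\<lambda>i. p (i, v i))" using e[symmetric] by blast
      then obtain j where "p (i, u i) = p (j, v j)" by blast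
      then show ?thesis using injp unfolding inj_def by blast
    qed
    then show "u = v" by blast
  qed
  then show ?thesis by blast
qed

lemma gsum_cyclic_onto:
  fixes M :: "('r::ring_1, 'm) lmod"
  assumes M: "lmodule M"
  shows "gsum M ` mcarrier (dsum M (mcarrier M) (\<lambda>y. range (\<lambda>r. msmult M r y))) = mcarrier M"
proof
  let ?N = "\<lambda>y. range (\<lambda>r. msmult M r y)"
  have N: "\<And>y. y \<in> mcarrier M \<Longrightarrow> submod M (?N y)" using submod_cyclic[OF M] .
  show "gsum M ` mcarrier (dsum M (mcarrier M) ?N) \<subseteq> mcarrier M"
    using gsum_closed[of M "mcarrier M" ?N, OF M N] by (simp add: image_subset_iff)
  show "mcarrier M \<subseteq> gsum M ` mcarrier (dsum M (mcarrier M) ?N)"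
  proof
    fix y assume y: "y \<in> mcarrier M"
    define u where "u = (\<lambda>j. if j = y then y else mzero M)"
    have u: "u \<in> mcarrier (dsum M (mcarrier M) ?N)"
    proof -
      have "{j. u j \<noteq> mzero M} \<subseteq> {y}" unfolding u_def by auto
      moreover have "y \<in> ?N y" using rangeI[of "\<lambda>r. msmult M r y" 1] lm_one[OF M y] by simp
      moreover have "mzero M \<in> ?N j" if "j \<in> mcarrier M" for j
        using N[OF that] unfolding submod_def by blast
      ultimately show ?thesis using y unfolding dsum_simps u_def by (auto intro: finite_subset)
    qed
    have "gsum M u = finprod (add_monoid M) u {y}" by (rule gsum_eq[OF M N u]) (auto simp: u_def)
    also have "\<dots> = y"
      using comm_monoid.finprod_insert[OF comm_monoid_add_monoid[OF M], of "{}" y u] y lm_rzero[OF M y]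
      by (simp add: u_def finprod_empty_add_monoid[OF M])
    finally show "y \<in> gsum M ` mcarrier (dsum M (mcarrier M) ?N)" using u by (rule image_eqI[OF sym])
  qed
qed

lemma cyclic_split_infinite:
  fixes M :: "('r::ring_1, 'm) lmod"
  assumes M: "lmodule M" and P: "proj_sigma M TYPE('m set)" and inf: "infinite (UNIV :: 'm set)"
    and x: "x \<in> mcarrier M"
  shows "cyclic_split M x"
proof -
  let ?I = "mcarrier M" and ?N = "\<lambda>y. range (\<lambda>r. msmult M r y)"
  have N: "\<And>y. y \<in> ?I \<Longrightarrow> submod M (?N y)" using submod_cyclic[OF M] .
  obtain enc :: "('m \<Rightarrow> 'm) \<Rightarrow> 'm set" where enc: "inj enc" using graph_encoding[OF inf] by blast
  have hid: "mhom M (sub M (gsum M ` mcarrier (dsum M ?I ?N))) id"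
    unfolding gsum_cyclic_onto[OF M] mhom_def by simp
  then obtain h where h: "mhom M (dsum M ?I ?N) h" "\<forall>m\<in>mcarrier M. gsum M (h m) = m"
    using lift_through_sum[where N = ?N and I = ?I, OF M P N inj_on_subset[OF enc subset_UNIV] hid] by auto
  have hx: "h x \<in> mcarrier (dsum M ?I ?N)" using h(1) x unfolding mhom_def by blast
  obtain n b where b: "\<forall>k<n. b k \<in> ?I" "gsum M (h x) = msum M (\<lambda>k. h x (b k)) n"
    using gsum_as_msum[where N = ?N and I = ?I, OF M N hx] by blast
  have "\<forall>k<n. b k \<in> mcarrier M \<and> mhom M (cyclic_sub M (b k)) (\<lambda>m. h m (b k))"
    using b(1) mhom_component[where N = ?N and I = ?I, OF M N h(1)] unfolding cyclic_sub_eq by blast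
  moreover have "x = msum M (\<lambda>k. h x (b k)) n" using b(2) h(2) x by simp
  ultimately show ?thesis unfolding cyclic_split_def
    by (intro exI[of _ n] exI[of _ b] exI[of _ "\<lambda>k m. h m (b k)"]) simp
qed

subsection \<open>Finite element type: induction along a spanning list with binary sums\<close>

text \<open>For finite \<open>'m\<close> the direct sum over all of \<open>M\<close> may be too large to be coded by sets
  of elements, but a direct sum of two submodules embeds into \<open>M \<times> M\<close>, which is small enough
  once \<open>'m\<close> has at least four elements. We therefore split off one cyclic summand at a time.\<close>

lemma sq_le_pow2: "4 \<le> (k::nat) \<Longrightarrow> k * k \<le> 2 ^ k"
proof (induction k rule: nat_induct_at_least)
  case (Suc k)
  have "2 * k + 1 \<le> k * k" using mult_le_mono1[OF Suc.hyps, of k] Suc.hyps by linarith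
  then show ?case using Suc.IH by simp
qed simp

lemma pair_encoding:
  assumes fin: "finite (UNIV :: 'm set)" and four: "4 \<le> card (UNIV :: 'm set)"
  shows "\<exists>enc :: (bool \<Rightarrow> 'm) \<Rightarrow> 'm set. inj enc"
proof -
  define \<phi> where "\<phi> u = (u True, u False)" for u :: "bool \<Rightarrow> 'm"
  have inj\<phi>: "inj \<phi>"
  proof (rule injI)
    fix u v assume "\<phi> u = \<phi> v"
    then have "u b = v b" for b by (cases b) (simp_all add: \<phi>_def)
    then show "u = v" by blast
  qed
  have im: "\<phi> ` UNIV \<subseteq> UNIV \<times> UNIV" by simp
  have finF: "finite (UNIV :: (bool \<Rightarrow> 'm) set)" using inj_on_finite[OF inj\<phi> im finite_cartesian_product[OF fin fin]] .
  have "card (UNIV :: (bool \<Rightarrow> 'm) set) \<le> card (UNIV \<times> UNIV :: ('m \<times> 'm) set)"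
    by (rule card_inj_on_le[OF inj\<phi> im finite_cartesian_product[OF fin fin]])
  also have "\<dots> = card (UNIV :: 'm set) * card (UNIV :: 'm set)" by (rule card_cartesian_product)
  also have "\<dots> \<le> 2 ^ card (UNIV :: 'm set)" using sq_le_pow2[OF four] .
  also have "\<dots> = card (UNIV :: 'm set set)" using card_Pow[OF fin] by (simp add: Pow_UNIV)
  finally obtain enc :: "(bool \<Rightarrow> 'm) \<Rightarrow> 'm set" where "inj enc"
    using card_le_inj[OF finF] fin by (metis finite_Pow_iff Pow_UNIV)
  then show ?thesis by blast
qed

text \<open>A module that is not cyclic has at least four elements: \<open>0, z, w, z + w\<close> are
  distinct when \<open>z \<noteq> 0\<close> and \<open>w \<notin> R z\<close>.\<close>

lemma noncyclic_card:
  assumes M: "lmodule M" and fin: "finite (mcarrier M)"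
    and nc: "\<forall>y\<in>mcarrier M. \<not> mcarrier M \<subseteq> range (\<lambda>r. msmult M r y)"
  shows "4 \<le> card (mcarrier M)"
proof -
  obtain z where z: "z \<in> mcarrier M" "z \<notin> range (\<lambda>r. msmult M r (mzero M))"
    using nc lm_zero[OF M] by blast
  have z0: "z \<noteq> mzero M" using z(2) lm_smult_zero[OF M] by (metis rangeI)
  obtain w where w: "w \<in> mcarrier M" "w \<notin> range (\<lambda>r. msmult M r z)" using nc z(1) by blast
  have w0: "w \<noteq> mzero M" using w(2) lm_zero_smult[OF M z(1)] by (metis rangeI)
  have wz: "w \<noteq> z" using w(2) lm_one[OF M z(1)] by (metis rangeI)
  let ?v = "madd M z w"
  have v0: "?v \<noteq> mzero M"
  proof
    assume "?v = mzero M"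
    then have "w = msmult M (-1) z" using lm_neg_unique[OF M z(1) w(1)] by simp
    then show False using w(2) by (metis rangeI)
  qed
  have vz: "?v \<noteq> z"
    using lm_cancel[OF M z(1) w(1) lm_zero[OF M]] lm_rzero[OF M z(1)] w0 by auto
  have vw: "?v \<noteq> w"
    using lm_cancel[OF M w(1) z(1) lm_zero[OF M]] lm_rzero[OF M w(1)] lm_comm[OF M z(1) w(1)] z0 by auto
  have "card {mzero M, z, w, ?v} = 4" using z0 w0 wz v0 vz vw by auto
  moreover have "{mzero M, z, w, ?v} \<subseteq> mcarrier M" using lm_zero[OF M] z(1) w(1) lm_add[OF M] by auto
  ultimately show ?thesis using card_mono[OF fin] by metis
qed

fun lspan :: "('r::ring_1, 'm) lmod \<Rightarrow> 'm list \<Rightarrow> 'm set" where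
  "lspan M [] = {mzero M}"
| "lspan M (y # L) = {madd M (msmult M r y) s | r s. s \<in> lspan M L}"

lemma lspan_submod:
  assumes M: "lmodule M"
  shows "set L \<subseteq> mcarrier M \<Longrightarrow> submod M (lspan M L)"
proof (induction L)
  case Nil
  then show ?case unfolding submod_def using lm_zero[OF M] lm_lzero[OF M] lm_smult_zero[OF M] by auto
next
  case (Cons y L)
  have y: "y \<in> mcarrier M" using Cons.prems by simp
  have SC: "lspan M L \<subseteq> mcarrier M" and S0: "mzero M \<in> lspan M L"
    and Sa: "\<And>a b. a \<in> lspan M L \<Longrightarrow> b \<in> lspan M L \<Longrightarrow> madd M a b \<in> lspan M L"
    and Ss: "\<And>r a. a \<in> lspan M L \<Longrightarrow> msmult M r a \<in> lspan M L"
    using Cons unfolding submod_def by auto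
  show ?case unfolding submod_def
  proof (intro conjI ballI allI)
    show "lspan M (y # L) \<subseteq> mcarrier M" using SC lm_add[OF M] lm_smult[OF M y] by auto
    have "mzero M = madd M (msmult M 0 y) (mzero M)"
      using lm_zero_smult[OF M y] lm_lzero[OF M lm_zero[OF M]] by simp
    then show "mzero M \<in> lspan M (y # L)" using S0 by auto
  next
    fix a b assume "a \<in> lspan M (y # L)" "b \<in> lspan M (y # L)"
    then obtain r s r' s' where rs: "a = madd M (msmult M r y) s" "s \<in> lspan M L"
      "b = madd M (msmult M r' y) s'" "s' \<in> lspan M L" by auto
    have "madd M a b = madd M (madd M (msmult M r y) (msmult M r' y)) (madd M s s')"
      unfolding rs(1,3) using lm_swap[OF M] lm_smult[OF M y] SC rs by blast
    also have "\<dots> = madd M (msmult M (r + r') y) (madd M s s')" using lm_add_smult[OF M y] by simp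
    finally show "madd M a b \<in> lspan M (y # L)" using Sa rs by auto
  next
    fix t a assume "a \<in> lspan M (y # L)"
    then obtain r s where rs: "a = madd M (msmult M r y) s" "s \<in> lspan M L" by auto
    have "msmult M t a = madd M (msmult M (t * r) y) (msmult M t s)"
      unfolding rs(1) using lm_smult_add[OF M] lm_smult[OF M y] SC rs lm_smult_assoc[OF M y] by auto
    then show "msmult M t a \<in> lspan M (y # L)" using Ss rs by auto
  qed
qed

lemma lspan_mem:
  assumes M: "lmodule M"
  shows "set L \<subseteq> mcarrier M \<Longrightarrow> x \<in> set L \<Longrightarrow> x \<in> lspan M L"
proof (induction L)
  case (Cons y L)
  have y: "y \<in> mcarrier M" using Cons.prems by simp
  have S0: "mzero M \<in> lspan M L" using lspan_submod[OF M, of L] Cons.prems unfolding submod_def by simp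
  show ?case
  proof (cases "x = y")
    case True
    have "x = madd M (msmult M 1 y) (mzero M)" using True lm_one[OF M y] lm_rzero[OF M y] by simp
    then show ?thesis using S0 by auto
  next
    case False
    then have "x \<in> lspan M L" "x \<in> mcarrier M" using Cons by auto
    moreover have "x = madd M (msmult M 0 y) x" using calculation(2) lm_zero_smult[OF M y] lm_lzero[OF M] by simp
    ultimately show ?thesis by auto
  qed
qed simp

lemma gsum_bool:
  fixes M :: "('r::ring_1, 'm) lmod" and N :: "bool \<Rightarrow> 'm set"
  assumes M: "lmodule M" and N: "\<And>i. submod M (N i)" and u: "u \<in> mcarrier (dsum M UNIV N)"
  shows "gsum M u = madd M (u True) (u False)"
proof -
  note CM = comm_monoid_add_monoid[OF M]
  have val: "u i \<in> mcarrier M" for i using dsum_val[OF M N u] .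
  have "gsum M u = finprod (add_monoid M) u {True, False}"
    by (rule gsum_eq[OF M N u]) auto
  also have "\<dots> = madd M (u True) (finprod (add_monoid M) u {False})"
    using comm_monoid.finprod_insert[OF CM, of "{False}" True u] val by (simp add: Pi_def)
  also have "finprod (add_monoid M) u {False} = u False"
    using comm_monoid.finprod_insert[OF CM, of "{}" False u] val lm_rzero[OF M]
    by (simp add: Pi_def finprod_empty_add_monoid[OF M])
  finally show ?thesis .
qed

text \<open>An endomorphism with values in the span of \<open>y # L\<close> lifts through
  \<open>R y \<oplus> span L \<rightarrow> M\<close>; its first component maps into \<open>R y\<close> and the second is handled by
  induction.\<close>

lemma endo_sum_of_cyclic:
  fixes M :: "('r::ring_1, 'm) lmod" and enc :: "(bool \<Rightarrow> 'm) \<Rightarrow> 'm set"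
  assumes M: "lmodule M" and P: "proj_sigma M TYPE('m set)"
    and enc: "inj_on enc (mcarrier (dsum M UNIV (\<lambda>_. mcarrier M)))"
  shows "set L \<subseteq> mcarrier M \<Longrightarrow> mhom M M f \<Longrightarrow> f ` mcarrier M \<subseteq> lspan M L \<Longrightarrow>
    \<exists>n ys hs. (\<forall>j<n. ys j \<in> mcarrier M \<and> mhom M (cyclic_sub M (ys j)) (hs j)) \<and>
       (\<forall>x\<in>mcarrier M. f x = msum M (\<lambda>j. hs j x) n)"
proof (induction L arbitrary: f)
  case Nil
  then have "\<forall>x\<in>mcarrier M. f x = msum M (\<lambda>j. id x) 0" by auto
  then show ?case by (intro exI[of _ 0] exI[of _ "\<lambda>_. mzero M"] exI[of _ "\<lambda>_. id"]) simp
next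
  case (Cons y L)
  have y: "y \<in> mcarrier M" and LC: "set L \<subseteq> mcarrier M" using Cons.prems by auto
  define N where "N b = (if b then range (\<lambda>r. msmult M r y) else lspan M L)" for b
  have N: "\<And>b. submod M (N b)" unfolding N_def using submod_cyclic[OF M y] lspan_submod[OF M LC] by auto
  let ?D = "dsum M UNIV N"
  have "lspan M (y # L) \<subseteq> gsum M ` mcarrier ?D"
  proof
    fix z assume "z \<in> lspan M (y # L)"
    then obtain r s where rs: "z = madd M (msmult M r y) s" "s \<in> lspan M L" by auto
    define u where "u b = (if b then msmult M r y else s)" for b
    have u: "u \<in> mcarrier ?D" using rs(2) unfolding dsum_simps u_def N_def by auto
    then have "gsum M u = z" using gsum_bool[OF M N u] rs(1) unfolding u_def by simp
    then show "z \<in> gsum M ` mcarrier ?D" using u by blast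
  qed
  then have "mhom M (sub M (gsum M ` mcarrier ?D)) f"
    using Cons.prems(2,3) unfolding mhom_def sub_simps by blast
  then obtain h where h: "mhom M ?D h" "\<forall>m\<in>mcarrier M. gsum M (h m) = f m"
    using lift_through_sum[where N = N and I = UNIV, OF M P N enc] by blast
  have h1: "mhom M (cyclic_sub M y) (\<lambda>m. h m True)"
    using mhom_component[where N = N and I = UNIV and i = True, OF M N h(1)]
    unfolding cyclic_sub_eq N_def by simp
  have h2: "mhom M (sub M (lspan M L)) (\<lambda>m. h m False)"
    using mhom_component[where N = N and I = UNIV and i = False, OF M N h(1)] unfolding N_def by simp
  then have "mhom M M (\<lambda>m. h m False)" "(\<lambda>m. h m False) ` mcarrier M \<subseteq> lspan M L"
    using lspan_submod[OF M LC] unfolding mhom_def submod_def by auto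
  then obtain n ys hs where IH: "\<forall>j<n. ys j \<in> mcarrier M \<and> mhom M (cyclic_sub M (ys j)) (hs j)"
    "\<forall>x\<in>mcarrier M. h x False = msum M (\<lambda>j. hs j x) n"
    using Cons.IH[OF LC] by blast
  let ?hs = "hs(n := (\<lambda>m. h m True))"
  have "\<forall>j<Suc n. (ys(n := y)) j \<in> mcarrier M \<and> mhom M (cyclic_sub M ((ys(n := y)) j)) (?hs j)"
    using IH(1) h1 y by (auto simp: less_Suc_eq)
  moreover have "f x = msum M (\<lambda>j. ?hs j x) (Suc n)" if x: "x \<in> mcarrier M" for x
  proof -
    have hx: "h x \<in> mcarrier ?D" using h(1) x unfolding mhom_def by blast
    have "msum M (\<lambda>j. ?hs j x) n = msum M (\<lambda>j. hs j x) n" by (rule msum_cong) simp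
    then have "msum M (\<lambda>j. ?hs j x) (Suc n) = madd M (h x False) (h x True)" using IH(2) x by simp
    also have "\<dots> = gsum M (h x)" using gsum_bool[OF M N hx] lm_comm[OF M] dsum_val[OF M N hx] by simp
    finally show ?thesis using h(2) x by simp
  qed
  ultimately show ?case by blast
qed

lemma cyclic_split_finite:
  fixes M :: "('r::ring_1, 'm) lmod"
  assumes M: "lmodule M" and P: "proj_sigma M TYPE('m set)" and fin: "finite (UNIV :: 'm set)"
    and x: "x \<in> mcarrier M"
  shows "cyclic_split M x"
proof (cases "\<exists>y\<in>mcarrier M. mcarrier M \<subseteq> range (\<lambda>r. msmult M r y)")
  case True
  then obtain y where y: "y \<in> mcarrier M" "mcarrier M \<subseteq> range (\<lambda>r. msmult M r y)" by blast
  have "mhom M (cyclic_sub M y) id" using y(2) unfolding mhom_def cyclic_sub_def by auto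
  moreover have "x = msum M (\<lambda>j. id x) 1" using lm_lzero[OF M x] by simp
  ultimately show ?thesis unfolding cyclic_split_def using y(1)
    by (intro exI[of _ 1] exI[of _ "\<lambda>_. y"] exI[of _ "\<lambda>_. id"]) auto
next
  case False
  have finM: "finite (mcarrier M)" using fin by (rule finite_subset[rotated]) simp
  have "4 \<le> card (mcarrier M)" using noncyclic_card[OF M finM] False by simp
  also have "\<dots> \<le> card (UNIV :: 'm set)" using card_mono[OF fin] by simp
  finally obtain enc :: "(bool \<Rightarrow> 'm) \<Rightarrow> 'm set" where enc: "inj enc"
    using pair_encoding[OF fin] by blast
  obtain L where L: "set L = mcarrier M" using finite_list[OF finM] by blast
  have "mhom M M id" "id ` mcarrier M \<subseteq> lspan M L" using lspan_mem[OF M] L unfolding mhom_def by auto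
  then obtain n ys hs where "\<forall>j<n. ys j \<in> mcarrier M \<and> mhom M (cyclic_sub M (ys j)) (hs j)"
    "\<forall>x\<in>mcarrier M. id x = msum M (\<lambda>j. hs j x) n"
    using endo_sum_of_cyclic[OF M P inj_on_subset[OF enc subset_UNIV], of L id] L by auto
  then show ?thesis unfolding cyclic_split_def using x
    by (intro exI[of _ n] exI[of _ ys] exI[of _ hs]) simp
qed

theorem corollary3p7:
  fixes M :: "('r::ring_1, 'm) lmod"
  assumes "lmodule M"
    and "proj_sigma M TYPE('m set)"
  shows "Nil_star M = mprod M (Nil_star M) M \<and> Nil_star M = MNil_star M M"
proof
  show "Nil_star M = mprod M (Nil_star M) M" using Nil_star_product[OF assms] .
  have "cyclic_split M x" if "x \<in> mcarrier M" for x
    using cyclic_split_finite[OF assms _ that] cyclic_split_infinite[OF assms _ that] by blast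
  then show "Nil_star M = MNil_star M M" using Nil_star_eq_MNil_star[OF assms(1)] by blast
qed

end
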